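(* The bialgebra $\mathcal{T}op$ is isomorphic to a shuffle twisted bialgebra $(\cot(\mathcal{Q}),\sqcup\!\sqcup,\Delta)$ for some species $\mathcal{Q}$.
   Context: $\mathcal{T}op[A]$ is the vector space generated by finite topologies (quasi-posets) on $A$; it is a twisted bialgebra with product disjoint union and coproduct $\Delta_{A,B}(T)=T_{\mid A}\otimes T_{\mid B}$ if $B$ is an open set (upward-closed set) of $T$, $0$ otherwise. For a species $\mathcal{Q}$ with $\mathcal{Q}[\emptyset]=(0)$, $\cot(\mathcal{Q})[A]=\bigoplus_{(A_1,\ldots,A_k)}\mathcal{Q}[A_1]\otimes\cdots\otimes\mathcal{Q}[A_k]$ (sum over set compositions of $A$) with deconcatenation coproduct $\Delta$, and the shuffle product $\sqcup\!\sqcup$ is $x_1\ldots x_k\,\sqcup\!\sqcup\,x_{k+1}\ldots x_{k+l}=\sum_\sigma x_{\sigma^{-1}(1)}\ldots x_{\sigma^{-1}(k+l)}$ over permutations $\sigma$ of $\{1,\ldots,k+l\}$ increasing on $\{1,\ldots,k\}$ and on $\{k+1,\ldots,k+l\}$. *)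

theory Defs
  imports Main
begin

text \<open>A vector of the free vector space with basis S is a finitely supported
  coefficient function supported in S.\<close>

definition supp :: "('x \<Rightarrow> 'k::zero) \<Rightarrow> 'x set" where
  "supp f = {x. f x \<noteq> 0}"

definition finsupp_on :: "'x set \<Rightarrow> ('x \<Rightarrow> 'k::zero) \<Rightarrow> bool" where
  "finsupp_on S f \<longleftrightarrow> finite (supp f) \<and> supp f \<subseteq> S"

text \<open>Linear extension: the image of the vector c under the linear map sending
  basis element x to F x.\<close>

definition lincomb :: "('x \<Rightarrow> 'k::comm_ring_1) \<Rightarrow> ('x \<Rightarrow> 'y \<Rightarrow> 'k) \<Rightarrow> ('y \<Rightarrow> 'k)" where
  "lincomb c F = (\<lambda>y. \<Sum>x\<in>supp c. c x * F x y)"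

definition delta_vec :: "'x \<Rightarrow> ('x \<Rightarrow> 'k::zero_neq_one)" where
  "delta_vec x = (\<lambda>y. if y = x then 1 else 0)"

text \<open>Finite sets are modelled as finite subsets of nat. A topology on A is
  identified with its quasi-order (preorder) R on A, (x,y) \<in> R meaning x \<le> y.\<close>

definition quasi_poset_on :: "nat set \<Rightarrow> nat rel \<Rightarrow> bool" where
  "quasi_poset_on A R \<longleftrightarrow> R \<subseteq> A \<times> A \<and> (\<forall>x\<in>A. (x, x) \<in> R) \<and> trans R"

definition top_basis :: "nat set \<Rightarrow> nat rel set" where
  "top_basis A = {R. quasi_poset_on A R}"

text \<open>Open sets = upward closed sets.\<close>
definition upclosed :: "nat rel \<Rightarrow> nat set \<Rightarrow> bool" where
  "upclosed R B \<longleftrightarrow> (\<forall>x y. (x, y) \<in> R \<longrightarrow> x \<in> B \<longrightarrow> y \<in> B)"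

definition restr :: "nat rel \<Rightarrow> nat set \<Rightarrow> nat rel" where
  "restr R A = R \<inter> (A \<times> A)"

definition top_act :: "(nat \<Rightarrow> nat) \<Rightarrow> nat rel \<Rightarrow> nat rel" where
  "top_act \<sigma> R = (\<lambda>(x, y). (\<sigma> x, \<sigma> y)) ` R"

text \<open>A species Q is given by: QB A, a set of labels (natural numbers) indexing a
  basis of Q[A]; and Qact \<sigma> A b, the image under Q[\<sigma>] of the basis element b of
  Q[A], for a bijection \<sigma> : A \<rightarrow> \<sigma> ` A, written in the basis of Q[\<sigma> ` A].\<close>

definition species :: "(nat set \<Rightarrow> nat set) \<Rightarrow> ((nat \<Rightarrow> nat) \<Rightarrow> nat set \<Rightarrow> nat \<Rightarrow> nat \<Rightarrow> 'k::comm_ring_1) \<Rightarrow> bool" where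
  "species QB Qact \<longleftrightarrow>
     (\<forall>A B \<sigma> b. finite A \<and> bij_betw \<sigma> A B \<and> b \<in> QB A \<longrightarrow> finsupp_on (QB B) (Qact \<sigma> A b)) \<and>
     (\<forall>A \<sigma> \<tau> b. finite A \<and> (\<forall>x\<in>A. \<sigma> x = \<tau> x) \<longrightarrow> Qact \<sigma> A b = Qact \<tau> A b) \<and>
     (\<forall>A b. finite A \<and> b \<in> QB A \<longrightarrow> Qact id A b = delta_vec b) \<and>
     (\<forall>A B C \<sigma> \<tau> b. finite A \<and> bij_betw \<sigma> A B \<and> bij_betw \<tau> B C \<and> b \<in> QB A \<longrightarrow>
        Qact (\<tau> \<circ> \<sigma>) A b = lincomb (Qact \<sigma> A b) (Qact \<tau> B))"

text \<open>Basis of cot(Q)[A]: words (A_1,b_1)...(A_k,b_k) where (A_1,...,A_k) is a set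
  composition of A and b_i is a basis element of Q[A_i]; such a word stands for the
  tensor b_1 \<otimes> ... \<otimes> b_k \<in> Q[A_1] \<otimes> ... \<otimes> Q[A_k].\<close>

type_synonym word = "(nat set \<times> nat) list"

definition set_composition :: "nat set \<Rightarrow> nat set list \<Rightarrow> bool" where
  "set_composition A As \<longleftrightarrow>
     (\<forall>X\<in>set As. finite X \<and> X \<noteq> {}) \<and>
     (\<forall>i<length As. \<forall>j<length As. i \<noteq> j \<longrightarrow> As ! i \<inter> As ! j = {}) \<and>
     \<Union>(set As) = A"

definition cot_basis :: "(nat set \<Rightarrow> nat set) \<Rightarrow> nat set \<Rightarrow> word set" where
  "cot_basis QB A = {w. set_composition A (map fst w) \<and> (\<forall>(X, b)\<in>set w. b \<in> QB X)}"

text \<open>Species structure of cot(Q): Q[\<sigma>] \<otimes> ... \<otimes> Q[\<sigma>] on each tensor factor.\<close>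
definition cot_act :: "((nat \<Rightarrow> nat) \<Rightarrow> nat set \<Rightarrow> nat \<Rightarrow> nat \<Rightarrow> 'k::comm_ring_1)
    \<Rightarrow> (nat \<Rightarrow> nat) \<Rightarrow> word \<Rightarrow> word \<Rightarrow> 'k" where
  "cot_act Qact \<sigma> w = (\<lambda>w'.
     if map fst w' = map (\<lambda>p. \<sigma> ` fst p) w
     then (\<Prod>i<length w. Qact \<sigma> (fst (w ! i)) (snd (w ! i)) (snd (w' ! i)))
     else 0)"

definition shuffle_prod :: "(word \<Rightarrow> 'k::comm_ring_1) \<Rightarrow> (word \<Rightarrow> 'k) \<Rightarrow> (word \<Rightarrow> 'k)" where
  "shuffle_prod a b = (\<lambda>w. \<Sum>u\<in>supp a. \<Sum>v\<in>supp b.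
      a u * b v * (if w \<in> shuffles u v then 1 else 0))"

text \<open>\<phi> A R is the image of the basis element R of Top[A] in cot(Q)[A]; the
  family of linear maps is the linear extension.\<close>

definition top_cot_iso :: "(nat set \<Rightarrow> nat set) \<Rightarrow> ((nat \<Rightarrow> nat) \<Rightarrow> nat set \<Rightarrow> nat \<Rightarrow> nat \<Rightarrow> 'k::comm_ring_1)
    \<Rightarrow> (nat set \<Rightarrow> nat rel \<Rightarrow> word \<Rightarrow> 'k) \<Rightarrow> bool" where
  "top_cot_iso QB Qact \<phi> \<longleftrightarrow>
     \<comment> \<open>each \<phi>_A maps Top[A] into cot(Q)[A] ...\<close>
     (\<forall>A R. finite A \<and> R \<in> top_basis A \<longrightarrow> finsupp_on (cot_basis QB A) (\<phi> A R)) \<and>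
     \<comment> \<open>... and is a linear bijection\<close>
     (\<forall>A. finite A \<longrightarrow> bij_betw (\<lambda>x. lincomb x (\<phi> A))
          {x. finsupp_on (top_basis A) x} {y. finsupp_on (cot_basis QB A) y}) \<and>
     \<comment> \<open>naturality (morphism of species)\<close>
     (\<forall>A B \<sigma> R. finite A \<and> bij_betw \<sigma> A B \<and> R \<in> top_basis A \<longrightarrow>
          \<phi> B (top_act \<sigma> R) = lincomb (\<phi> A R) (cot_act Qact \<sigma>)) \<and>
     \<comment> \<open>unit\<close>
     \<phi> {} {} = delta_vec [] \<and>
     \<comment> \<open>compatibility with the products (disjoint union / shuffle)\<close>
     (\<forall>A B R S. finite A \<and> finite B \<and> A \<inter> B = {} \<and> R \<in> top_basis A \<and> S \<in> top_basis B \<longrightarrow>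
          \<phi> (A \<union> B) (R \<union> S) = shuffle_prod (\<phi> A R) (\<phi> B S)) \<and>
     \<comment> \<open>compatibility with the coproducts: the coefficient of u \<otimes> v in
         \<Delta>_{A,B}(\<phi>_{A \<union> B} T) equals that in (\<phi>_A \<otimes> \<phi>_B)(\<Delta>_{A,B} T)\<close>
     (\<forall>A B R. finite A \<and> finite B \<and> A \<inter> B = {} \<and> R \<in> top_basis (A \<union> B) \<longrightarrow>
          (\<forall>u\<in>cot_basis QB A. \<forall>v\<in>cot_basis QB B.
             \<phi> (A \<union> B) R (u @ v) =
               (if upclosed R B then \<phi> A (restr R A) u * \<phi> B (restr R B) v else 0)))"

end

theory Submission
  imports Defs "HOL-Library.Nat_Bijection" "HOL-Library.Function_Algebras" "HOL.Vector_Spaces"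
begin

text \<open>
  For \<open>a \<in> A\<close> let \<open>\<pi>\<^sub>a(R) = R - \<Sum>\<^sub>B R|\<^bsub>A-B\<^esub> \<cdot> \<pi>\<^sub>a(R|\<^sub>B)\<close>, summed over the proper open sets \<open>B\<close> of
  \<open>R\<close> containing \<open>a\<close>. By induction on \<open>|A|\<close>, \<open>\<pi>\<^sub>a\<close> vanishes on products (disjoint unions) and
  fixes primitive elements, so \<open>\<pi> = \<Sum>\<^sub>a \<pi>\<^sub>a\<close> kills products and is multiplication by \<open>|A|\<close> on
  primitives. Let \<open>Q\<close> be spanned by the topologies that are indecomposable for the ordinal sum,
  \<open>p\<close> the coordinate projection onto \<open>Q\<close>, and \<open>\<phi> = \<Sum>\<^sub>k (p\<pi>)\<^sup>\<otimes>\<^sup>k \<circ> \<Delta>\<^sup>(\<^sup>k\<^sup>-\<^sup>1\<^sup>)\<close>. This is a coalgebra map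
  into the cofree coalgebra \<open>cot(Q)\<close>, and it respects products because \<open>\<pi>\<close> kills them.
  It is injective by induction on \<open>|A|\<close>: an element of the kernel is primitive, so in
  characteristic 0 its coefficients on indecomposables vanish, and then a minimal element of its
  support would split as an ordinal sum, contradicting primitivity. Reading a word of \<open>cot(Q)[A]\<close> as
  the ordinal sum of its blocks embeds the basis of \<open>cot(Q)[A]\<close> into the topologies on \<open>A\<close>, so
  \<open>\<phi>\<close> is bijective by counting dimensions.
\<close>

section \<open>Restriction and relabelling of quasi-orders\<close>

lemma restr_restr: "restr (restr R A) B = restr R (A \<inter> B)"
  unfolding restr_def by auto

lemma restr_subset: "restr R A \<subseteq> A \<times> A"
  unfolding restr_def by auto

lemma restr_absorb: "R \<subseteq> A \<times> A \<Longrightarrow> restr R A = R"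
  unfolding restr_def by auto

lemma top_basis_subset: "R \<in> top_basis A \<Longrightarrow> R \<subseteq> A \<times> A"
  unfolding top_basis_def quasi_poset_on_def by auto

lemma top_basis_restr: "R \<in> top_basis A \<Longrightarrow> B \<subseteq> A \<Longrightarrow> restr R B \<in> top_basis B"
  unfolding top_basis_def quasi_poset_on_def restr_def trans_def by blast

lemma finite_top_basis: "finite A \<Longrightarrow> finite (top_basis A)"
  by (rule finite_subset[of _ "Pow (A \<times> A)"]) (use top_basis_subset in auto)

lemma finite_top_basis_rel: "finite A \<Longrightarrow> R \<in> top_basis A \<Longrightarrow> finite R"
  using top_basis_subset by (meson finite_SigmaI finite_subset)

lemma top_basis_empty: "top_basis {} = {{}}"
  unfolding top_basis_def quasi_poset_on_def trans_def by auto

lemma top_act_conv_image: "top_act \<sigma> R = map_prod \<sigma> \<sigma> ` R"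
  unfolding top_act_def map_prod_def ..

lemma top_act_id: "top_act id R = R"
  unfolding top_act_def by auto

lemma top_act_comp: "top_act (\<tau> \<circ> \<sigma>) R = top_act \<tau> (top_act \<sigma> R)"
  unfolding top_act_def by (auto simp: image_image case_prod_beta)

lemma top_act_cong: "(\<forall>x\<in>A. \<sigma> x = \<tau> x) \<Longrightarrow> R \<subseteq> A \<times> A \<Longrightarrow> top_act \<sigma> R = top_act \<tau> R"
  unfolding top_act_def by (rule image_cong) (auto simp: split_beta)

lemma finite_top_act: "finite R \<Longrightarrow> finite (top_act \<sigma> R)"
  unfolding top_act_def by simp

lemma top_act_subset: "R \<subseteq> A \<times> A \<Longrightarrow> top_act \<sigma> R \<subseteq> \<sigma> ` A \<times> \<sigma> ` A"
  unfolding top_act_def by auto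

lemma top_act_Int:
  assumes "inj_on \<sigma> A" "R \<subseteq> A \<times> A" "S \<subseteq> A \<times> A"
  shows "top_act \<sigma> (R \<inter> S) = top_act \<sigma> R \<inter> top_act \<sigma> S"
  unfolding top_act_conv_image by (rule inj_on_image_Int[OF map_prod_inj_on[OF assms(1,1)] assms(2,3)])

lemma top_act_inj:
  assumes "inj_on \<sigma> A" "R \<subseteq> A \<times> A" "S \<subseteq> A \<times> A"
  shows "top_act \<sigma> R = top_act \<sigma> S \<longleftrightarrow> R = S"
  unfolding top_act_conv_image by (rule inj_on_image_eq_iff[OF map_prod_inj_on[OF assms(1,1)] assms(2,3)])

lemma top_act_subset_iff:
  assumes "inj_on \<sigma> A" "R \<subseteq> A \<times> A" "S \<subseteq> A \<times> A"
  shows "top_act \<sigma> R \<subseteq> top_act \<sigma> S \<longleftrightarrow> R \<subseteq> S"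
proof -
  have "R \<inter> S \<subseteq> A \<times> A" using assms(2) by blast
  then show ?thesis
    using top_act_Int[OF assms] top_act_inj[OF assms(1) _ assms(2), of "R \<inter> S"] by (simp add: le_iff_inf)
qed

lemma top_act_Un: "top_act \<sigma> (R \<union> S) = top_act \<sigma> R \<union> top_act \<sigma> S"
  unfolding top_act_def by (rule image_Un)

lemma top_act_times: "top_act \<sigma> (X \<times> Y) = \<sigma> ` X \<times> \<sigma> ` Y"
  unfolding top_act_conv_image by (simp add: map_prod_surj_on)

lemma top_act_restr:
  assumes "inj_on \<sigma> A" "R \<subseteq> A \<times> A" "X \<subseteq> A"
  shows "restr (top_act \<sigma> R) (\<sigma> ` X) = top_act \<sigma> (restr R X)"
proof -
  have "X \<times> X \<subseteq> A \<times> A" using assms(3) by blast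
  then show ?thesis unfolding restr_def using top_act_Int[OF assms(1,2)] by (simp add: top_act_times)
qed

lemma top_act_upclosed_iff:
  assumes "inj_on \<sigma> A" "R \<subseteq> A \<times> A" "X \<subseteq> A"
  shows "upclosed (top_act \<sigma> R) (\<sigma> ` X) \<longleftrightarrow> upclosed R X"
proof -
  have "upclosed (top_act \<sigma> R) (\<sigma> ` X) \<longleftrightarrow> (\<forall>(x, y)\<in>R. \<sigma> x \<in> \<sigma> ` X \<longrightarrow> \<sigma> y \<in> \<sigma> ` X)"
    unfolding upclosed_def top_act_def by force
  also have "\<dots> \<longleftrightarrow> (\<forall>(x, y)\<in>R. x \<in> X \<longrightarrow> y \<in> X)"
    using assms(2) inj_on_image_mem_iff[OF assms(1) _ assms(3)] by blast
  finally show ?thesis unfolding upclosed_def by blast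
qed

lemma top_act_top_basis:
  assumes "bij_betw \<sigma> A B" "R \<in> top_basis A"
  shows "top_act \<sigma> R \<in> top_basis B"
proof -
  have inj: "inj_on \<sigma> A" using bij_betw_imp_inj_on[OF assms(1)] .
  have img: "\<sigma> ` A = B" using bij_betw_imp_surj_on[OF assms(1)] .
  have sub: "R \<subseteq> A \<times> A" using top_basis_subset[OF assms(2)] .
  have refl: "\<forall>x\<in>A. (x, x) \<in> R" and tr: "trans R"
    using assms(2) unfolding top_basis_def quasi_poset_on_def by auto
  have "trans (top_act \<sigma> R)"
  proof (rule transI)
    fix x y z assume "(x, y) \<in> top_act \<sigma> R" "(y, z) \<in> top_act \<sigma> R"
    then obtain a b c d where ac: "x = \<sigma> a" "\<sigma> b = \<sigma> c" "z = \<sigma> d" and R: "(a, b) \<in> R" "(c, d) \<in> R"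
      unfolding top_act_def by auto
    then have "b = c" using sub inj unfolding inj_on_def by blast
    then have "(a, d) \<in> R" using R tr transD by metis
    then show "(x, z) \<in> top_act \<sigma> R" unfolding ac top_act_def by force
  qed
  moreover have "\<forall>x\<in>B. (x, x) \<in> top_act \<sigma> R"
    using refl img unfolding top_act_def by force
  moreover have "top_act \<sigma> R \<subseteq> B \<times> B" using top_act_subset[OF sub, of \<sigma>] img by simp
  ultimately show ?thesis unfolding top_basis_def quasi_poset_on_def by blast
qed

section \<open>Ordinal indecomposable topologies\<close>

definition ord_indecomposable :: "nat set \<Rightarrow> nat rel \<Rightarrow> bool" where
  "ord_indecomposable A T \<longleftrightarrow> A \<noteq> {} \<and> (\<forall>C B. C \<union> B = A \<longrightarrow> C \<inter> B = {} \<longrightarrow> C \<noteq> {} \<longrightarrow> B \<noteq> {}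
      \<longrightarrow> \<not> (C \<times> B \<subseteq> T \<and> T \<inter> (B \<times> C) = {}))"

lemma ord_indecomposable_top_act:
  assumes inj: "inj_on \<sigma> A" and sub: "R \<subseteq> A \<times> A" and ind: "ord_indecomposable A R"
  shows "ord_indecomposable (\<sigma> ` A) (top_act \<sigma> R)"
  unfolding ord_indecomposable_def
proof (intro conjI allI impI notI)
  show "\<sigma> ` A = {} \<Longrightarrow> False" using ind unfolding ord_indecomposable_def by blast
next
  fix C B assume CB: "C \<union> B = \<sigma> ` A" "C \<inter> B = {}" "C \<noteq> {}" "B \<noteq> {}"
    and split: "C \<times> B \<subseteq> top_act \<sigma> R \<and> top_act \<sigma> R \<inter> (B \<times> C) = {}"
  define C' where "C' = A \<inter> \<sigma> -` C"
  define B' where "B' = A \<inter> \<sigma> -` B"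
  have "C \<subseteq> \<sigma> ` A" "B \<subseteq> \<sigma> ` A" using CB(1) by blast+
  then have C: "C = \<sigma> ` C'" and B: "B = \<sigma> ` B'" unfolding C'_def B'_def by blast+
  have sub': "C' \<times> B' \<subseteq> A \<times> A" "B' \<times> C' \<subseteq> A \<times> A" unfolding C'_def B'_def by blast+
  have "C' \<union> B' = A" "C' \<inter> B' = {}" "C' \<noteq> {}" "B' \<noteq> {}"
    using CB C B unfolding C'_def B'_def by auto
  moreover have "C' \<times> B' \<subseteq> R"
    using split top_act_subset_iff[OF inj sub'(1) sub] unfolding C B top_act_times by blast
  moreover have "top_act \<sigma> (R \<inter> (B' \<times> C')) = {}"
    using split top_act_Int[OF inj sub sub'(2)] unfolding C B top_act_times by blast
  then have "R \<inter> (B' \<times> C') = {}" unfolding top_act_def by blast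
  ultimately show False using ind unfolding ord_indecomposable_def by blast
qed

section \<open>Finitely supported coefficient functions\<close>

lemma supp_delta_vec: "supp (delta_vec x :: 'a \<Rightarrow> 'k::zero_neq_one) = {x}"
  unfolding supp_def delta_vec_def by auto

lemma lincomb_delta_vec: "lincomb (delta_vec x) F = F x"
  unfolding lincomb_def supp_delta_vec by (rule ext) (simp add: delta_vec_def)

lemma lincomb_eq_sum: "finite S \<Longrightarrow> supp c \<subseteq> S \<Longrightarrow> lincomb c F y = (\<Sum>x\<in>S. c x * F x y)"
  unfolding lincomb_def by (rule sum.mono_neutral_left) (auto simp: supp_def)

lemma lincomb_cong: "(\<And>x. x \<in> supp c \<Longrightarrow> F x = G x) \<Longrightarrow> lincomb c F = lincomb c G"
  unfolding lincomb_def by simp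

lemma lincomb_delta_vec_comp:
  "finite (supp c) \<Longrightarrow> lincomb c (\<lambda>x. delta_vec (f x)) y = (\<Sum>x\<in>{x\<in>supp c. f x = y}. c x)"
  unfolding lincomb_def delta_vec_def by (auto simp: sum.inter_filter eq_commute[of y] intro!: sum.cong)

lemma lincomb_delta_vec_self:
  assumes "finite (supp c)"
  shows "lincomb c delta_vec = c"
proof
  fix y
  have "lincomb c delta_vec y = (\<Sum>x\<in>{x\<in>supp c. x = y}. c x)"
    using lincomb_delta_vec_comp[OF assms, of "\<lambda>x. x"] by simp
  also have "{x\<in>supp c. x = y} = (if c y = 0 then {} else {y})" unfolding supp_def by auto
  finally show "lincomb c delta_vec y = c y" by simp
qed

lemma supp_diff_subset:
  fixes c d :: "'a \<Rightarrow> 'k::group_add"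
  shows "supp (\<lambda>x. c x - d x) \<subseteq> supp c \<union> supp d"
proof
  fix x assume "x \<in> supp (\<lambda>x. c x - d x)"
  then have "c x \<noteq> d x" unfolding supp_def by simp
  then show "x \<in> supp c \<union> supp d" unfolding supp_def by auto
qed

lemma lincomb_diff:
  assumes S: "finite S" "supp c \<subseteq> S" "supp d \<subseteq> S"
  shows "lincomb (\<lambda>x. c x - d x) F y = lincomb c F y - lincomb d F y"
proof -
  have "supp (\<lambda>x. c x - d x) \<subseteq> S" using supp_diff_subset[of c d] S(2,3) by blast
  then have "lincomb (\<lambda>x. c x - d x) F y = (\<Sum>x\<in>S. (c x - d x) * F x y)"
    by (rule lincomb_eq_sum[OF S(1)])
  also have "\<dots> = (\<Sum>x\<in>S. c x * F x y) - (\<Sum>x\<in>S. d x * F x y)"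
    by (simp add: left_diff_distrib sum_subtractf)
  also have "\<dots> = lincomb c F y - lincomb d F y"
    by (simp only: lincomb_eq_sum[OF S(1,2), of F y] lincomb_eq_sum[OF S(1,3), of F y])
  finally show ?thesis .
qed

lemma lincomb_tensor_injective:
  fixes F :: "'a \<Rightarrow> 'c \<Rightarrow> 'k::comm_ring_1" and G :: "'b \<Rightarrow> 'd \<Rightarrow> 'k"
  assumes injF: "\<And>x. finsupp_on S x \<Longrightarrow> lincomb x F = (\<lambda>_. 0) \<Longrightarrow> x = (\<lambda>_. 0)"
    and injG: "\<And>y. finsupp_on S' y \<Longrightarrow> lincomb y G = (\<lambda>_. 0) \<Longrightarrow> y = (\<lambda>_. 0)"
    and U: "finite U" "U \<subseteq> S" and V: "finite V" "V \<subseteq> S'"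
    and zero: "\<And>u v. (\<Sum>a\<in>U. \<Sum>b\<in>V. c a b * (F a u * G b v)) = 0"
    and ab: "a \<in> U" "b \<in> V"
  shows "c a b = 0"
proof -
  have "(\<Sum>b\<in>V. c a b * G b v) = 0" for v
  proof -
    define z where "z a' = (if a' \<in> U then (\<Sum>b\<in>V. c a' b * G b v) else 0)" for a'
    have sz: "supp z \<subseteq> U" unfolding supp_def z_def by auto
    have "lincomb z F u = (\<Sum>a\<in>U. \<Sum>b\<in>V. c a b * (F a u * G b v))" for u
      unfolding lincomb_eq_sum[OF U(1) sz] z_def
      by (simp add: sum_distrib_left sum_distrib_right mult_ac)
    then have "z = (\<lambda>_. 0)"
      using injF[of z] sz U zero finite_subset unfolding finsupp_on_def by fastforce
    then show ?thesis using ab(1) unfolding z_def by meson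
  qed
  define y where "y b' = (if b' \<in> V then c a b' else 0)" for b'
  have sy: "supp y \<subseteq> V" unfolding supp_def y_def by auto
  have "lincomb y G v = (\<Sum>b\<in>V. c a b * G b v)" for v
    unfolding lincomb_eq_sum[OF V(1) sy] y_def by simp
  then have "y = (\<lambda>_. 0)"
    using injG[of y] sy V \<open>\<And>v. (\<Sum>b\<in>V. c a b * G b v) = 0\<close> finite_subset
    unfolding finsupp_on_def by fastforce
  then show ?thesis using ab(2) unfolding y_def by meson
qed

definition fun_scale :: "'k::field \<Rightarrow> ('x \<Rightarrow> 'k) \<Rightarrow> 'x \<Rightarrow> 'k" where
  "fun_scale c f = (\<lambda>y. c * f y)"

interpretation fun_vs: vector_space "fun_scale :: 'k::field \<Rightarrow> ('x \<Rightarrow> 'k) \<Rightarrow> 'x \<Rightarrow> 'k"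
  by unfold_locales (auto simp: fun_scale_def algebra_simps fun_eq_iff)

lemma sum_fun_apply: "sum f I y = (\<Sum>i\<in>I. f i y)"
  by (induction I rule: infinite_finite_induct) auto

lemma lincomb_eq_fun_vs_sum:
  assumes "finite S" "supp c \<subseteq> S"
  shows "lincomb c F = (\<Sum>x\<in>S. fun_scale (c x) (F x))"
  unfolding lincomb_eq_sum[OF assms] sum_fun_apply fun_scale_def ..

lemma lincomb_injective_inj_on:
  assumes S: "finite S" and inj: "\<And>x. finsupp_on S x \<Longrightarrow> lincomb x F = (\<lambda>_. 0) \<Longrightarrow> x = (\<lambda>_. 0)"
  shows "inj_on (F :: 'a \<Rightarrow> 'b \<Rightarrow> 'k::comm_ring_1) S"
proof (rule inj_onI)
  fix s s' assume ss': "s \<in> S" "s' \<in> S" "F s = F s'"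
  define e where "e t = (delta_vec s t - delta_vec s' t :: 'k)" for t
  have sd: "supp (delta_vec s :: 'a \<Rightarrow> 'k) \<subseteq> S" "supp (delta_vec s' :: 'a \<Rightarrow> 'k) \<subseteq> S"
    using ss' by (simp_all add: supp_delta_vec)
  then have se: "supp e \<subseteq> S" using supp_diff_subset[of "delta_vec s" "delta_vec s'"] unfolding e_def by blast
  have "lincomb e F y = 0" for y
    unfolding e_def lincomb_diff[OF S sd] lincomb_delta_vec using ss'(3) by simp
  then have "e = (\<lambda>_. 0)" using inj se finite_subset[OF se S] unfolding finsupp_on_def by blast
  then show "s = s'" using fun_cong[of e _ s] unfolding e_def delta_vec_def by (auto split: if_splits)
qed

lemma lincomb_image_eq_fun_vs_sum:
  assumes "finite S" "inj_on F S"
  shows "lincomb (\<lambda>s. if s \<in> S then u (F s) else 0) F = (\<Sum>f\<in>F ` S. fun_scale (u f) f)"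
proof -
  have "supp (\<lambda>s. if s \<in> S then u (F s) else 0) \<subseteq> S" unfolding supp_def by auto
  from lincomb_eq_fun_vs_sum[OF assms(1) this] show ?thesis by (simp add: sum.reindex[OF assms(2)])
qed

lemma fun_vs_independent_image:
  fixes F :: "'a \<Rightarrow> 'b \<Rightarrow> 'k::field"
  assumes S: "finite S" and inj: "\<And>x. finsupp_on S x \<Longrightarrow> lincomb x F = (\<lambda>_. 0) \<Longrightarrow> x = (\<lambda>_. 0)"
  shows "fun_vs.independent (F ` S)"
proof (rule fun_vs.independent_if_scalars_zero)
  fix u f assume z: "(\<Sum>f\<in>F ` S. fun_scale (u f) f) = 0" and f: "f \<in> F ` S"
  have "finsupp_on S (\<lambda>s. if s \<in> S then u (F s) else 0)"
    using finite_subset[OF _ S] unfolding finsupp_on_def supp_def by auto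
  moreover have "inj_on F S" using S inj by (rule lincomb_injective_inj_on)
  then have "lincomb (\<lambda>s. if s \<in> S then u (F s) else 0) F = (\<Sum>f\<in>F ` S. fun_scale (u f) f)"
    by (rule lincomb_image_eq_fun_vs_sum[OF S])
  then have "lincomb (\<lambda>s. if s \<in> S then u (F s) else 0) F = (\<lambda>_. 0)"
    using z by (simp add: zero_fun_def)
  ultimately have "(\<lambda>s. if s \<in> S then u (F s) else 0) = (\<lambda>_. 0)" by (rule inj)
  then have "u (F s) = 0" if "s \<in> S" for s using fun_cong[of _ _ s] that by fastforce
  then show "u f = 0" using f by blast
qed (use S in simp)

lemma fun_vs_span_delta_vec:
  assumes C: "finite C" and g: "supp g \<subseteq> C"
  shows "g \<in> fun_vs.span ((delta_vec :: 'b \<Rightarrow> 'b \<Rightarrow> 'k::field) ` C)"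
proof -
  have "g = lincomb g delta_vec" using lincomb_delta_vec_self[OF finite_subset[OF g C]] by simp
  also have "\<dots> = (\<Sum>w\<in>C. fun_scale (g w) (delta_vec w))" by (rule lincomb_eq_fun_vs_sum[OF C g])
  also have "\<dots> \<in> fun_vs.span (delta_vec ` C)"
    by (intro fun_vs.span_sum fun_vs.span_scale fun_vs.span_base imageI)
  finally show ?thesis .
qed

lemma lincomb_surjective:
  fixes F :: "'a \<Rightarrow> 'b \<Rightarrow> 'k::field"
  assumes S: "finite S" and C: "finite C" and card: "card C \<le> card S"
    and supp: "\<And>s. s \<in> S \<Longrightarrow> supp (F s) \<subseteq> C"
    and inj: "\<And>x. finsupp_on S x \<Longrightarrow> lincomb x F = (\<lambda>_. 0) \<Longrightarrow> x = (\<lambda>_. 0)"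
    and y: "finsupp_on C y"
  shows "\<exists>x. finsupp_on S x \<and> lincomb x F = y"
proof -
  define D where "D = (delta_vec :: 'b \<Rightarrow> 'b \<Rightarrow> 'k) ` C"
  have injF: "inj_on F S" using S inj by (rule lincomb_injective_inj_on)
  have "D \<subseteq> fun_vs.span (F ` S)"
  proof
    fix t assume t: "t \<in> D"
    show "t \<in> fun_vs.span (F ` S)"
    proof (rule ccontr)
      assume nt: "t \<notin> fun_vs.span (F ` S)"
      then have "fun_vs.independent (insert t (F ` S))"
        using fun_vs.independent_insertI fun_vs_independent_image[OF S inj] by blast
      moreover have "insert t (F ` S) \<subseteq> fun_vs.span D"
        using t supp fun_vs_span_delta_vec[OF C] fun_vs.span_base unfolding D_def by blast
      ultimately have "card (insert t (F ` S)) \<le> card D"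
        using fun_vs.independent_span_bound[of D] C unfolding D_def by blast
      moreover have "card D \<le> card (F ` S)"
        using card card_image_le[OF C, of "delta_vec :: 'b \<Rightarrow> 'b \<Rightarrow> 'k"] card_image[OF injF]
        unfolding D_def by linarith
      moreover have "t \<notin> F ` S" using nt fun_vs.span_base by blast
      ultimately show False using S by simp
    qed
  qed
  moreover have "y \<in> fun_vs.span D" using y fun_vs_span_delta_vec[OF C] unfolding finsupp_on_def D_def by blast
  ultimately have "y \<in> fun_vs.span (F ` S)" using fun_vs.span_mono fun_vs.span_span by blast
  then obtain u where "y = (\<Sum>f\<in>F ` S. fun_scale (u f) f)" using fun_vs.span_finite S by auto
  moreover have "finsupp_on S (\<lambda>s. if s \<in> S then u (F s) else 0)"
    using finite_subset[OF _ S] unfolding finsupp_on_def supp_def by auto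
  ultimately show ?thesis using lincomb_image_eq_fun_vs_sum[OF S injF] by blast
qed

lemma lincomb_bij_betw:
  fixes F :: "'a \<Rightarrow> 'b \<Rightarrow> 'k::field"
  assumes S: "finite S" and C: "finite C" and card: "card C \<le> card S"
    and supp: "\<And>s. s \<in> S \<Longrightarrow> supp (F s) \<subseteq> C"
    and inj: "\<And>x. finsupp_on S x \<Longrightarrow> lincomb x F = (\<lambda>_. 0) \<Longrightarrow> x = (\<lambda>_. 0)"
  shows "bij_betw (\<lambda>x. lincomb x F) {x. finsupp_on S x} {y. finsupp_on C y}"
  unfolding bij_betw_def
proof (intro conjI equalityI subsetI)
  show "inj_on (\<lambda>x. lincomb x F) {x. finsupp_on S x}"
  proof (rule inj_onI)
    fix x x' assume "x \<in> {x. finsupp_on S x}" "x' \<in> {x. finsupp_on S x}" and eq: "lincomb x F = lincomb x' F"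
    then have sx: "supp x \<subseteq> S" "supp x' \<subseteq> S" unfolding finsupp_on_def by auto
    then have "supp (\<lambda>s. x s - x' s) \<subseteq> S" using supp_diff_subset[of x x'] by blast
    then have "finsupp_on S (\<lambda>s. x s - x' s)" using finite_subset[OF _ S] unfolding finsupp_on_def by blast
    moreover have "lincomb (\<lambda>s. x s - x' s) F = (\<lambda>_. 0)"
      by (rule ext) (simp add: lincomb_diff[OF S sx] eq)
    ultimately have "(\<lambda>s. x s - x' s) = (\<lambda>_. 0)" by (rule inj)
    then show "x = x'" by (simp add: fun_eq_iff)
  qed
next
  fix y :: "'b \<Rightarrow> 'k" assume "y \<in> (\<lambda>x. lincomb x F) ` {x. finsupp_on S x}"
  then obtain x where x: "finsupp_on S x" and y: "y = lincomb x F" by blast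
  have "supp y \<subseteq> C"
  proof
    fix b assume "b \<in> supp y"
    then have "(\<Sum>s\<in>supp x. x s * F s b) \<noteq> 0" unfolding y supp_def lincomb_def by simp
    then obtain s where "s \<in> supp x" "x s * F s b \<noteq> 0" by (rule sum.not_neutral_contains_not_neutral)
    then have "s \<in> S" "b \<in> supp (F s)" using x unfolding finsupp_on_def supp_def by auto
    then show "b \<in> C" using supp by blast
  qed
  then show "y \<in> {y. finsupp_on C y}" using C finite_subset unfolding finsupp_on_def by blast
next
  fix y :: "'b \<Rightarrow> 'k" assume "y \<in> {y. finsupp_on C y}"
  then show "y \<in> (\<lambda>x. lincomb x F) ` {x. finsupp_on S x}"
    using lincomb_surjective[where F = F, OF S C card supp inj] by blast
qed

section \<open>The species of ordinal indecomposable topologies\<close>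

text \<open>Basis labels of a species are natural numbers, so topologies are stored through an
  injective encoding of finite relations.\<close>

definition rel_encode :: "nat rel \<Rightarrow> nat" where
  "rel_encode T = set_encode (prod_encode ` T)"

definition rel_decode :: "nat \<Rightarrow> nat rel" where
  "rel_decode b = prod_decode ` set_decode b"

lemma rel_decode_encode: "finite T \<Longrightarrow> rel_decode (rel_encode T) = T"
  unfolding rel_encode_def rel_decode_def by (simp add: image_image)

definition indec_labels :: "nat set \<Rightarrow> nat set" where
  "indec_labels A = rel_encode ` {T. finite A \<and> T \<in> top_basis A \<and> ord_indecomposable A T}"

definition indec_act :: "(nat \<Rightarrow> nat) \<Rightarrow> nat set \<Rightarrow> nat \<Rightarrow> nat \<Rightarrow> 'k::comm_ring_1" where
  "indec_act \<sigma> A b =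
     (if b \<in> indec_labels A then delta_vec (rel_encode (top_act \<sigma> (rel_decode b))) else (\<lambda>_. 0))"

lemma indec_labelsD:
  assumes "b \<in> indec_labels A"
  shows "finite A" "rel_decode b \<in> top_basis A" "ord_indecomposable A (rel_decode b)"
    "rel_encode (rel_decode b) = b"
proof -
  obtain T where T: "b = rel_encode T" "finite A" "T \<in> top_basis A" "ord_indecomposable A T"
    using assms unfolding indec_labels_def by auto
  then have "rel_decode b = T" using finite_top_basis_rel rel_decode_encode by blast
  then show "finite A" "rel_decode b \<in> top_basis A" "ord_indecomposable A (rel_decode b)"
    "rel_encode (rel_decode b) = b" using T by auto
qed

lemma indec_labelsI:
  "finite A \<Longrightarrow> T \<in> top_basis A \<Longrightarrow> ord_indecomposable A T \<Longrightarrow> rel_encode T \<in> indec_labels A"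
  unfolding indec_labels_def by auto

lemma indec_labels_empty: "indec_labels {} = {}"
  unfolding indec_labels_def ord_indecomposable_def by auto

lemma finite_indec_labels: "finite (indec_labels A)"
  unfolding indec_labels_def by (cases "finite A") (simp_all add: finite_top_basis)

lemma indec_labels_act:
  assumes "bij_betw \<sigma> A B" "b \<in> indec_labels A"
  shows "rel_encode (top_act \<sigma> (rel_decode b)) \<in> indec_labels B"
    and "rel_decode (rel_encode (top_act \<sigma> (rel_decode b))) = top_act \<sigma> (rel_decode b)"
proof -
  have fA: "finite A" and T: "rel_decode b \<in> top_basis A" "ord_indecomposable A (rel_decode b)"
    using indec_labelsD[OF assms(2)] by auto
  have fB: "finite B" using fA assms(1) bij_betw_finite by blast
  have tb: "top_act \<sigma> (rel_decode b) \<in> top_basis B" using top_act_top_basis[OF assms(1) T(1)] .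
  have "ord_indecomposable (\<sigma> ` A) (top_act \<sigma> (rel_decode b))"
    using ord_indecomposable_top_act[OF bij_betw_imp_inj_on[OF assms(1)] top_basis_subset[OF T(1)] T(2)] .
  then show "rel_encode (top_act \<sigma> (rel_decode b)) \<in> indec_labels B"
    using indec_labelsI fB tb bij_betw_imp_surj_on[OF assms(1)] by auto
  show "rel_decode (rel_encode (top_act \<sigma> (rel_decode b))) = top_act \<sigma> (rel_decode b)"
    using rel_decode_encode finite_top_basis_rel[OF fB tb] by auto
qed

lemma species_indec_act: "species indec_labels (indec_act :: _ \<Rightarrow> _ \<Rightarrow> _ \<Rightarrow> _ \<Rightarrow> 'k::comm_ring_1)"
  unfolding species_def
proof (intro conjI allI impI)
  fix A B :: "nat set" and \<sigma> :: "nat \<Rightarrow> nat" and b :: nat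
  assume "finite A \<and> bij_betw \<sigma> A B \<and> b \<in> indec_labels A"
  then show "finsupp_on (indec_labels B) (indec_act \<sigma> A b :: _ \<Rightarrow> 'k)"
    unfolding finsupp_on_def indec_act_def using indec_labels_act[of \<sigma> A B b] by (simp add: supp_delta_vec)
next
  fix A :: "nat set" and \<sigma> \<tau> :: "nat \<Rightarrow> nat" and b :: nat
  assume "finite A \<and> (\<forall>x\<in>A. \<sigma> x = \<tau> x)"
  then show "(indec_act \<sigma> A b :: _ \<Rightarrow> 'k) = indec_act \<tau> A b"
    unfolding indec_act_def using indec_labelsD(2) top_basis_subset top_act_cong by metis
next
  fix A :: "nat set" and b :: nat
  assume "finite A \<and> b \<in> indec_labels A"
  then show "(indec_act id A b :: _ \<Rightarrow> 'k) = delta_vec b"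
    unfolding indec_act_def using indec_labelsD(4)[of b A] by (simp add: top_act_id)
next
  fix A B C :: "nat set" and \<sigma> \<tau> :: "nat \<Rightarrow> nat" and b :: nat
  assume "finite A \<and> bij_betw \<sigma> A B \<and> bij_betw \<tau> B C \<and> b \<in> indec_labels A"
  then show "(indec_act (\<tau> \<circ> \<sigma>) A b :: _ \<Rightarrow> 'k) = lincomb (indec_act \<sigma> A b) (indec_act \<tau> B)"
    using indec_labels_act[of \<sigma> A B b] unfolding indec_act_def by (simp add: lincomb_delta_vec top_act_comp)
qed

section \<open>Set compositions and the basis of cot(Q)\<close>

lemma set_composition_iff:
  "set_composition A Xs \<longleftrightarrow> (\<forall>X\<in>set Xs. finite X \<and> X \<noteq> {}) \<and> distinct Xs \<and>
     (\<forall>X\<in>set Xs. \<forall>Y\<in>set Xs. X \<noteq> Y \<longrightarrow> X \<inter> Y = {}) \<and> \<Union>(set Xs) = A"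
proof
  assume h: "set_composition A Xs"
  have ne: "\<forall>X\<in>set Xs. finite X \<and> X \<noteq> {}" using h unfolding set_composition_def by (elim conjE)
  have dj: "\<forall>i<length Xs. \<forall>j<length Xs. i \<noteq> j \<longrightarrow> Xs ! i \<inter> Xs ! j = {}"
    using h unfolding set_composition_def by (elim conjE)
  have u: "\<Union>(set Xs) = A" using h unfolding set_composition_def by (elim conjE)
  have d: "distinct Xs"
    unfolding distinct_conv_nth
  proof (intro allI impI)
    fix i j assume ij: "i < length Xs" "j < length Xs" "i \<noteq> j"
    have 1: "Xs ! i \<inter> Xs ! j = {}" using dj ij by blast
    have "Xs ! i \<in> set Xs" using ij(1) by simp
    then have 2: "Xs ! i \<noteq> {}" using ne by blast
    show "Xs ! i \<noteq> Xs ! j" using 1 2 by force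
  qed
  have p: "\<forall>X\<in>set Xs. \<forall>Y\<in>set Xs. X \<noteq> Y \<longrightarrow> X \<inter> Y = {}"
  proof (intro ballI impI)
    fix X Y assume XY: "X \<in> set Xs" "Y \<in> set Xs" "X \<noteq> Y"
    obtain i where i: "i < length Xs" "X = Xs ! i" using XY(1) by (metis in_set_conv_nth)
    obtain j where j: "j < length Xs" "Y = Xs ! j" using XY(2) by (metis in_set_conv_nth)
    have "i \<noteq> j" using i j XY(3) by blast
    then show "X \<inter> Y = {}" using dj i j by blast
  qed
  show "(\<forall>X\<in>set Xs. finite X \<and> X \<noteq> {}) \<and> distinct Xs \<and>
     (\<forall>X\<in>set Xs. \<forall>Y\<in>set Xs. X \<noteq> Y \<longrightarrow> X \<inter> Y = {}) \<and> \<Union>(set Xs) = A"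
    using ne d p u by (intro conjI)
next
  assume h: "(\<forall>X\<in>set Xs. finite X \<and> X \<noteq> {}) \<and> distinct Xs \<and>
     (\<forall>X\<in>set Xs. \<forall>Y\<in>set Xs. X \<noteq> Y \<longrightarrow> X \<inter> Y = {}) \<and> \<Union>(set Xs) = A"
  have ne: "\<forall>X\<in>set Xs. finite X \<and> X \<noteq> {}" and d: "distinct Xs"
    and p: "\<forall>X\<in>set Xs. \<forall>Y\<in>set Xs. X \<noteq> Y \<longrightarrow> X \<inter> Y = {}" and u: "\<Union>(set Xs) = A"
    using h by blast+
  have "\<forall>i<length Xs. \<forall>j<length Xs. i \<noteq> j \<longrightarrow> Xs ! i \<inter> Xs ! j = {}"
  proof (intro allI impI)
    fix i j assume ij: "i < length Xs" "j < length Xs" "i \<noteq> j"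
    have neq: "Xs ! i \<noteq> Xs ! j" using nth_eq_iff_index_eq[OF d ij(1) ij(2)] ij(3) by simp
    have "Xs ! i \<in> set Xs" "Xs ! j \<in> set Xs" using ij by simp_all
    then show "Xs ! i \<inter> Xs ! j = {}" using p neq by blast
  qed
  then show "set_composition A Xs" unfolding set_composition_def using ne u by (intro conjI)
qed

lemma set_composition_append:
  assumes a: "set_composition A Xs" and b: "set_composition B Ys" and ab: "A \<inter> B = {}"
  shows "set_composition (A \<union> B) (Xs @ Ys)"
proof -
  have neX: "\<forall>X\<in>set Xs. finite X \<and> X \<noteq> {}" and dX: "distinct Xs"
    and pX: "\<forall>X\<in>set Xs. \<forall>Y\<in>set Xs. X \<noteq> Y \<longrightarrow> X \<inter> Y = {}" and uX: "\<Union>(set Xs) = A"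
    using a unfolding set_composition_iff by blast+
  have neY: "\<forall>X\<in>set Ys. finite X \<and> X \<noteq> {}" and dY: "distinct Ys"
    and pY: "\<forall>X\<in>set Ys. \<forall>Y\<in>set Ys. X \<noteq> Y \<longrightarrow> X \<inter> Y = {}" and uY: "\<Union>(set Ys) = B"
    using b unfolding set_composition_iff by blast+
  have cross: "X \<inter> Y = {}" if "X \<in> set Xs" "Y \<in> set Ys" for X Y
    using that uX uY ab by blast
  then have "set Xs \<inter> set Ys = {}" using neX by fastforce
  then have "distinct (Xs @ Ys)" using dX dY by simp
  moreover have "\<forall>X\<in>set (Xs @ Ys). \<forall>Y\<in>set (Xs @ Ys). X \<noteq> Y \<longrightarrow> X \<inter> Y = {}"
    using pX pY cross by (metis Int_commute Un_iff set_append)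
  ultimately show ?thesis unfolding set_composition_iff using neX neY uX uY by auto
qed

lemma set_composition_length:
  assumes "set_composition A Xs" "finite A"
  shows "length Xs \<le> card A"
proof -
  have ne: "\<forall>X\<in>set Xs. finite X \<and> X \<noteq> {}" and d: "distinct Xs"
    and dj: "\<forall>X\<in>set Xs. \<forall>Y\<in>set Xs. X \<noteq> Y \<longrightarrow> X \<inter> Y = {}" and u: "\<Union>(set Xs) = A"
    using assms unfolding set_composition_iff by auto
  have "length Xs = (\<Sum>X\<in>set Xs. 1)" using d by (simp add: distinct_card)
  also have "\<dots> \<le> (\<Sum>X\<in>set Xs. card X)"
    by (rule sum_mono) (use ne in \<open>auto simp: Suc_le_eq card_gt_0_iff\<close>)
  also have "\<dots> = card A"
    unfolding u[symmetric] using card_UN_disjoint[of "set Xs" id] ne dj by simp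
  finally show ?thesis .
qed

lemma cot_basis_blocks:
  assumes "w \<in> cot_basis QB A" "(X, b) \<in> set w"
  shows "X \<subseteq> A" "finite X" "X \<noteq> {}" "b \<in> QB X"
proof -
  have sc: "set_composition A (map fst w)" and q: "\<forall>(X, b)\<in>set w. b \<in> QB X"
    using assms(1) unfolding cot_basis_def by auto
  have X: "X \<in> set (map fst w)" using assms(2) by force
  show "X \<subseteq> A" "finite X" "X \<noteq> {}" using sc X unfolding set_composition_iff by blast+
  show "b \<in> QB X" using q assms(2) by blast
qed

lemma cot_basis_blocks_subset: "w \<in> cot_basis QB A \<Longrightarrow> \<forall>X\<in>set (map fst w). X \<subseteq> A"
  unfolding cot_basis_def set_composition_iff by auto

lemma finite_cot_basis:
  assumes "finite A" "\<And>X. finite (QB X)"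
  shows "finite (cot_basis QB A)"
proof (rule finite_subset)
  show "cot_basis QB A \<subseteq> {w. set w \<subseteq> Pow A \<times> (\<Union>X\<in>Pow A. QB X) \<and> length w \<le> card A}"
  proof
    fix w assume w: "w \<in> cot_basis QB A"
    have "set_composition A (map fst w)" using w unfolding cot_basis_def by blast
    from set_composition_length[OF this assms(1)] have "length w \<le> card A" by simp
    moreover have "set w \<subseteq> Pow A \<times> (\<Union>X\<in>Pow A. QB X)"
    proof
      fix p assume p: "p \<in> set w"
      show "p \<in> Pow A \<times> (\<Union>X\<in>Pow A. QB X)"
      proof (cases p)
        case (Pair X b)
        then show ?thesis using cot_basis_blocks(1,4)[OF w, of X b] p by auto
      qed
    qed
    ultimately show "w \<in> {w. set w \<subseteq> Pow A \<times> (\<Union>X\<in>Pow A. QB X) \<and> length w \<le> card A}"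
      by blast
  qed
  show "finite {w. set w \<subseteq> Pow A \<times> (\<Union>X\<in>Pow A. QB X) \<and> length w \<le> card A}"
    by (rule finite_lists_length_le) (simp add: assms)
qed

lemma cot_basis_empty: "cot_basis QB {} = {[]}"
proof -
  have "w = []" if "w \<in> cot_basis QB {}" for w
  proof (rule ccontr)
    assume "w \<noteq> []"
    then obtain p w' where "w = p # w'" by (cases w) auto
    then have "fst p \<noteq> {}" "fst p \<subseteq> {}" using that unfolding cot_basis_def set_composition_iff by auto
    then show False by auto
  qed
  moreover have "[] \<in> cot_basis QB {}" unfolding cot_basis_def set_composition_iff by auto
  ultimately show ?thesis by auto
qed

lemma cot_basis_append:
  assumes "u \<in> cot_basis QB A" "v \<in> cot_basis QB B" "A \<inter> B = {}"
  shows "u @ v \<in> cot_basis QB (A \<union> B)"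
proof -
  have "set_composition A (map fst u)" "set_composition B (map fst v)"
    using assms(1,2) unfolding cot_basis_def by auto
  then have "set_composition (A \<union> B) (map fst (u @ v))"
    using set_composition_append[OF _ _ assms(3)] by simp
  moreover have "\<forall>(X, b)\<in>set (u @ v). b \<in> QB X"
    using assms(1,2) unfolding cot_basis_def by auto
  ultimately show ?thesis unfolding cot_basis_def by blast
qed

lemma cot_basis_Cons:
  assumes "(X, b) # w \<in> cot_basis QB A"
  shows "w \<in> cot_basis QB (A - X)" "X \<subseteq> A" "X \<noteq> {}" "b \<in> QB X"
    "\<Union>(fst ` set w) = A - X"
proof -
  have sc: "set_composition A (X # map fst w)" and bq: "\<forall>(Y, c)\<in>set ((X, b) # w). c \<in> QB Y"
    using assms unfolding cot_basis_def by auto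
  have ne: "\<forall>Y\<in>set (X # map fst w). finite Y \<and> Y \<noteq> {}" and d: "distinct (X # map fst w)"
    and p: "\<forall>Y\<in>set (X # map fst w). \<forall>Z\<in>set (X # map fst w). Y \<noteq> Z \<longrightarrow> Y \<inter> Z = {}"
    and u: "\<Union>(set (X # map fst w)) = A" using sc unfolding set_composition_iff by blast+
  have dX: "X \<inter> Y = {}" if "Y \<in> set (map fst w)" for Y
  proof -
    have "X \<noteq> Y" using d that by auto
    then show ?thesis using p that by auto
  qed
  have uw: "\<Union>(set (map fst w)) = A - X"
  proof
    show "\<Union>(set (map fst w)) \<subseteq> A - X" using u dX by auto
    show "A - X \<subseteq> \<Union>(set (map fst w))" using u by auto
  qed
  then show "\<Union>(fst ` set w) = A - X" by simp
  have "set_composition (A - X) (map fst w)"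
    unfolding set_composition_iff using ne d p uw by auto
  moreover have "\<forall>(Y, c)\<in>set w. c \<in> QB Y" using bq by auto
  ultimately show "w \<in> cot_basis QB (A - X)" unfolding cot_basis_def by blast
  show "X \<subseteq> A" "X \<noteq> {}" using u ne by auto
  show "b \<in> QB X" using bq by auto
qed

lemma cot_basis_filter:
  assumes "w \<in> cot_basis QB A"
  shows "filter P w \<in> cot_basis QB (\<Union>(fst ` set (filter P w)))"
proof -
  have sc: "set_composition A (map fst w)" and q: "\<forall>(X, b)\<in>set w. b \<in> QB X"
    using assms unfolding cot_basis_def by auto
  define Xs where "Xs = map fst (filter P w)"
  have sub: "set Xs \<subseteq> set (map fst w)" unfolding Xs_def by auto
  have "distinct Xs" using sc distinct_map_filter unfolding Xs_def set_composition_iff by blast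
  moreover have "\<forall>X\<in>set Xs. finite X \<and> X \<noteq> {}"
    "\<forall>X\<in>set Xs. \<forall>Y\<in>set Xs. X \<noteq> Y \<longrightarrow> X \<inter> Y = {}"
    using sc sub unfolding set_composition_iff by blast+
  moreover have "\<Union>(set Xs) = \<Union>(fst ` set (filter P w))" unfolding Xs_def by simp
  ultimately have "set_composition (\<Union>(fst ` set (filter P w))) Xs" unfolding set_composition_iff by blast
  then show ?thesis using q unfolding cot_basis_def Xs_def by auto
qed

lemma map_shuffles: "w \<in> shuffles u v \<Longrightarrow> map f w \<in> shuffles (map f u) (map f v)"
  by (induction u v arbitrary: w rule: shuffles.induct)
    (auto intro: Cons_in_shuffles_leftI Cons_in_shuffles_rightI)

lemma shuffles_cot_basis:
  assumes "A \<inter> B = {}" "u \<in> cot_basis QB A" "v \<in> cot_basis QB B" "w \<in> shuffles u v"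
  shows "w \<in> cot_basis QB (A \<union> B)"
proof -
  have uv: "u @ v \<in> cot_basis QB (A \<union> B)" using cot_basis_append assms(1-3) by blast
  then have sc: "set_composition (A \<union> B) (map fst u @ map fst v)" and q: "\<forall>(X, b)\<in>set (u @ v). b \<in> QB X"
    unfolding cot_basis_def by auto
  then have "distinct (map fst u)" "distinct (map fst v)" "set (map fst u) \<inter> set (map fst v) = {}"
    unfolding set_composition_iff by auto
  then have "distinct (map fst w)"
    using distinct_disjoint_shuffles map_shuffles[OF assms(4)] by blast
  moreover have sw: "set w = set u \<union> set v" using set_shuffles[OF assms(4)] .
  ultimately have "set_composition (A \<union> B) (map fst w)"
    using sc unfolding set_composition_iff by (simp add: image_Un)
  then show ?thesis using q sw unfolding cot_basis_def by auto
qed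

lemma shuffles_cot_basis_filter:
  assumes AB: "A \<inter> B = {}" and u: "u \<in> cot_basis QB A" and v: "v \<in> cot_basis QB B"
    and w: "w \<in> shuffles u v"
  shows "u = filter (\<lambda>p. fst p \<subseteq> A) w" "v = filter (\<lambda>p. \<not> fst p \<subseteq> A) w"
proof -
  have "\<forall>p\<in>set u. fst p \<subseteq> A" using cot_basis_blocks_subset[OF u] by simp
  moreover have "\<not> fst p \<subseteq> A" if "p \<in> set v" for p
  proof -
    have "fst p \<subseteq> B" "fst p \<noteq> {}" using cot_basis_blocks(1,3)[OF v, of "fst p" "snd p"] that by simp_all
    then show ?thesis using AB by blast
  qed
  ultimately have "filter (\<lambda>p. fst p \<subseteq> A) u = u" "filter (\<lambda>p. fst p \<subseteq> A) v = []"
    "filter (\<lambda>p. \<not> fst p \<subseteq> A) u = []" "filter (\<lambda>p. \<not> fst p \<subseteq> A) v = v"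
    by (simp_all add: filter_id_conv filter_empty_conv)
  then show "u = filter (\<lambda>p. fst p \<subseteq> A) w" "v = filter (\<lambda>p. \<not> fst p \<subseteq> A) w"
    using imageI[OF w, of "filter (\<lambda>p. fst p \<subseteq> A)"] imageI[OF w, of "filter (\<lambda>p. \<not> fst p \<subseteq> A)"]
    unfolding filter_shuffles by simp_all
qed

lemma cot_basis_partition:
  assumes w: "w \<in> cot_basis QB (A \<union> B)" and AB: "A \<inter> B = {}"
    and blocks: "\<forall>p\<in>set w. fst p \<subseteq> A \<or> fst p \<subseteq> B"
  shows "filter (\<lambda>p. fst p \<subseteq> A) w \<in> cot_basis QB A" "filter (\<lambda>p. \<not> fst p \<subseteq> A) w \<in> cot_basis QB B"
proof -
  have U: "\<Union>(fst ` set w) = A \<union> B" and ne: "\<forall>p\<in>set w. fst p \<noteq> {}"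
    using w unfolding cot_basis_def set_composition_iff by auto
  have UA: "\<Union>(fst ` set (filter (\<lambda>p. fst p \<subseteq> A) w)) = A"
  proof
    show "A \<subseteq> \<Union>(fst ` set (filter (\<lambda>p. fst p \<subseteq> A) w))"
    proof
      fix x assume "x \<in> A"
      then obtain p where "p \<in> set w" "x \<in> fst p" using U by blast
      moreover from this have "fst p \<subseteq> A" using blocks AB \<open>x \<in> A\<close> by blast
      ultimately show "x \<in> \<Union>(fst ` set (filter (\<lambda>p. fst p \<subseteq> A) w))" by (intro UN_I[of p]) simp_all
    qed
  qed auto
  have UB: "\<Union>(fst ` set (filter (\<lambda>p. \<not> fst p \<subseteq> A) w)) = B"
  proof
    show "B \<subseteq> \<Union>(fst ` set (filter (\<lambda>p. \<not> fst p \<subseteq> A) w))"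
    proof
      fix x assume "x \<in> B"
      then obtain p where "p \<in> set w" "x \<in> fst p" using U by blast
      moreover from this have "\<not> fst p \<subseteq> A" using AB \<open>x \<in> B\<close> by blast
      ultimately show "x \<in> \<Union>(fst ` set (filter (\<lambda>p. \<not> fst p \<subseteq> A) w))" by (intro UN_I[of p]) simp_all
    qed
  qed (use blocks in auto)
  show "filter (\<lambda>p. fst p \<subseteq> A) w \<in> cot_basis QB A"
    using cot_basis_filter[OF w, of "\<lambda>p. fst p \<subseteq> A"] unfolding UA .
  show "filter (\<lambda>p. \<not> fst p \<subseteq> A) w \<in> cot_basis QB B"
    using cot_basis_filter[OF w, of "\<lambda>p. \<not> fst p \<subseteq> A"] unfolding UB .
qed

lemma prod_list_shuffles:
  fixes g :: "'a \<Rightarrow> 'b::comm_monoid_mult"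
  shows "w \<in> shuffles u v \<Longrightarrow> prod_list (map g w) = prod_list (map g u) * prod_list (map g v)"
  by (induction u v arbitrary: w rule: shuffles.induct) (auto simp: mult_ac)

lemma shuffle_prod_eq_single:
  assumes fin: "finite (supp a)" "finite (supp b)" and w: "w \<in> shuffles u0 v0"
    and uniq: "\<And>u v. u \<in> supp a \<Longrightarrow> v \<in> supp b \<Longrightarrow> w \<in> shuffles u v \<Longrightarrow> u = u0 \<and> v = v0"
  shows "shuffle_prod a b w = a u0 * b v0"
proof -
  have "(\<Sum>v\<in>supp b. a u * b v * (if w \<in> shuffles u v then 1 else 0)) =
      (if u = u0 \<and> v0 \<in> supp b then a u * b v0 else 0)" if u: "u \<in> supp a" for u
  proof -
    have "a u * b v * (if w \<in> shuffles u v then 1 else 0) = (if v = v0 \<and> u = u0 then a u * b v else 0)"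
      if "v \<in> supp b" for v
      using w uniq[OF u that] by (cases "w \<in> shuffles u v") auto
    then have "(\<Sum>v\<in>supp b. a u * b v * (if w \<in> shuffles u v then 1 else 0)) =
        (\<Sum>v\<in>supp b. if v = v0 \<and> u = u0 then a u * b v else 0)"
      by (rule sum.cong[OF refl])
    also have "\<dots> = (if u = u0 \<and> v0 \<in> supp b then a u * b v0 else 0)"
      using fin(2) by (cases "u = u0") auto
    finally show ?thesis .
  qed
  then have "shuffle_prod a b w = (\<Sum>u\<in>supp a. if u = u0 \<and> v0 \<in> supp b then a u * b v0 else 0)"
    unfolding shuffle_prod_def by (rule sum.cong[OF refl])
  also have "\<dots> = (if u0 \<in> supp a \<and> v0 \<in> supp b then a u0 * b v0 else 0)"
    using fin(1) by (cases "v0 \<in> supp b") auto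
  also have "\<dots> = a u0 * b v0" by (auto simp: supp_def)
  finally show ?thesis .
qed

section \<open>Projections onto primitive elements\<close>

definition splits_off :: "nat rel \<Rightarrow> nat set \<Rightarrow> nat rel \<Rightarrow> nat set \<Rightarrow> bool" where
  "splits_off T C U B \<longleftrightarrow> restr T C = U \<and> T \<subseteq> C \<times> C \<union> B \<times> B"

definition proper_open_nbhds :: "nat rel \<Rightarrow> nat set \<Rightarrow> nat \<Rightarrow> nat set set" where
  "proper_open_nbhds R A a = {B. B \<subseteq> A \<and> a \<in> B \<and> B \<noteq> A \<and> upclosed R B}"

lemma finite_proper_open_nbhds: "finite A \<Longrightarrow> finite (proper_open_nbhds R A a)"
  unfolding proper_open_nbhds_def by (rule finite_subset[of _ "Pow A"]) auto

text \<open>\<^term>\<open>prim_proj a A R T\<close> is the coefficient of \<open>T\<close> in \<open>\<pi>\<^sub>a(R)\<close>; in the recursion,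
  \<^term>\<open>splits_off T (A - B) (restr R (A - B)) B\<close> says that \<open>T\<close> is the disjoint union of
  \<open>R|\<^bsub>A-B\<^esub>\<close> and a topology on \<open>B\<close>.\<close>

function prim_proj :: "nat \<Rightarrow> nat set \<Rightarrow> nat rel \<Rightarrow> nat rel \<Rightarrow> 'k::comm_ring_1" where
  "prim_proj a A R T = (if finite A then (if T = R then 1 else 0) -
     (\<Sum>B\<in>proper_open_nbhds R A a.
        if splits_off T (A - B) (restr R (A - B)) B then prim_proj a B (restr R B) (restr T B) else 0)
     else 0)"
  by pat_completeness auto
termination
  by (relation "measure (\<lambda>(a, A, R, T). card A)")
    (auto simp: proper_open_nbhds_def intro: psubset_card_mono)

declare prim_proj.simps[simp del]

lemma splits_off_disjoint_union_iff:
  assumes A: "A = P \<union> Q" and dj: "P \<inter> Q = {}" and B: "B \<subseteq> P" and D: "D \<subseteq> P \<times> P \<union> Q \<times> Q"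
  shows "splits_off T (A - B) (restr D (A - B)) B \<longleftrightarrow>
    splits_off T Q (restr D Q) P \<and> splits_off (restr T P) (P - B) (restr (restr D P) (P - B)) B"
  unfolding splits_off_def
proof
  assume h: "restr T (A - B) = restr D (A - B) \<and> T \<subseteq> (A - B) \<times> (A - B) \<union> B \<times> B"
  have Qs: "Q \<subseteq> A - B" and Ps: "P - B \<subseteq> A - B" using A dj B by blast+
  have "restr T Q = restr D Q"
    using h Qs by (metis restr_restr Int_absorb1)
  moreover have "restr (restr T P) (P - B) = restr (restr D P) (P - B)"
    using h Ps by (metis restr_restr Int_absorb1 Int_commute Diff_subset Int_absorb2)
  moreover have "T \<subseteq> Q \<times> Q \<union> P \<times> P"
  proof
    fix p assume p: "p \<in> T"
    show "p \<in> Q \<times> Q \<union> P \<times> P"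
    proof (cases "p \<in> B \<times> B")
      case False
      then have "p \<in> restr D (A - B)" using h p unfolding restr_def by blast
      then show ?thesis using D unfolding restr_def by blast
    qed (use B in blast)
  qed
  moreover have "restr T P \<subseteq> (P - B) \<times> (P - B) \<union> B \<times> B"
    using h A unfolding restr_def by blast
  ultimately show "(restr T Q = restr D Q \<and> T \<subseteq> Q \<times> Q \<union> P \<times> P) \<and>
      (restr (restr T P) (P - B) = restr (restr D P) (P - B) \<and> restr T P \<subseteq> (P - B) \<times> (P - B) \<union> B \<times> B)"
    by blast
next
  assume h: "(restr T Q = restr D Q \<and> T \<subseteq> Q \<times> Q \<union> P \<times> P) \<and>
      (restr (restr T P) (P - B) = restr (restr D P) (P - B) \<and> restr T P \<subseteq> (P - B) \<times> (P - B) \<union> B \<times> B)"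
  then have TQ: "restr T Q = restr D Q" and T: "T \<subseteq> Q \<times> Q \<union> P \<times> P"
    and TP: "restr T (P - B) = restr D (P - B)" and TB: "restr T P \<subseteq> (P - B) \<times> (P - B) \<union> B \<times> B"
    by (auto simp: restr_restr Int_absorb1 Int_absorb2 Int_commute)
  have "T \<subseteq> (A - B) \<times> (A - B) \<union> B \<times> B"
  proof
    fix p assume p: "p \<in> T"
    then have "p \<in> Q \<times> Q \<or> p \<in> restr T P" using T unfolding restr_def by blast
    then show "p \<in> (A - B) \<times> (A - B) \<union> B \<times> B" using TB A dj B by blast
  qed
  moreover have "restr T (A - B) = restr D (A - B)"
  proof -
    have "A - B = (P - B) \<union> Q" using A dj B by blast
    moreover have "restr T ((P - B) \<union> Q) = restr T (P - B) \<union> restr T Q"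
      "restr D ((P - B) \<union> Q) = restr D (P - B) \<union> restr D Q"
      using T D dj unfolding restr_def by blast+
    ultimately show ?thesis using TQ TP by simp
  qed
  ultimately show "restr T (A - B) = restr D (A - B) \<and> T \<subseteq> (A - B) \<times> (A - B) \<union> B \<times> B" by blast
qed

lemma proper_open_nbhds_disjoint_union:
  assumes A: "A = P \<union> Q" and dj: "P \<inter> Q = {}" and Q: "Q \<noteq> {}"
    and D: "D \<subseteq> P \<times> P \<union> Q \<times> Q" and a: "a \<in> P"
  shows "{B \<in> proper_open_nbhds D A a. B \<subseteq> P} = insert P (proper_open_nbhds (restr D P) P a)"
proof -
  have "upclosed D B \<longleftrightarrow> upclosed (restr D P) B" if "B \<subseteq> P" for B
    using that D dj unfolding upclosed_def restr_def by blast
  then show ?thesis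
    using A dj Q a D unfolding proper_open_nbhds_def upclosed_def by auto
qed

lemma disjoint_union_eq_iff:
  assumes "D \<subseteq> P \<times> P \<union> Q \<times> Q"
  shows "T = D \<longleftrightarrow> splits_off T Q (restr D Q) P \<and> restr T P = restr D P"
proof
  assume "splits_off T Q (restr D Q) P \<and> restr T P = restr D P"
  then have "T = restr T P \<union> restr T Q" "D = restr D P \<union> restr D Q" "restr T Q = restr D Q"
    "restr T P = restr D P"
    using assms unfolding splits_off_def restr_def by blast+
  then show "T = D" by simp
qed (use assms in \<open>auto simp: splits_off_def restr_def\<close>)

text \<open>The open sets \<open>B \<ni> a\<close> meeting \<open>Q\<close> contribute nothing, by induction, since \<open>R|\<^sub>B\<close> is
  again a product; the others lie in \<open>P\<close> and reassemble \<open>R|\<^sub>Q \<cdot> R|\<^sub>P\<close> from the recursion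
  for \<open>\<pi>\<^sub>a(R|\<^sub>P)\<close>, cancelling the leading term \<open>R\<close>.\<close>

lemma prim_proj_disjoint_union_step:
  assumes IH: "\<And>B T'. B \<subset> A \<Longrightarrow> a \<in> B \<Longrightarrow> B \<inter> Q \<noteq> {} \<Longrightarrow>
      (prim_proj a B (restr D B) T' :: 'k::comm_ring_1) = 0"
    and fin: "finite A" and A: "A = P \<union> Q" and dj: "P \<inter> Q = {}" and Q: "Q \<noteq> {}"
    and D: "D \<subseteq> P \<times> P \<union> Q \<times> Q" and a: "a \<in> P"
  shows "(prim_proj a A D T :: 'k) = 0"
proof -
  define U where "U = restr D P"
  define T1 where "T1 = restr T P"
  define c where "c \<longleftrightarrow> splits_off T Q (restr D Q) P"
  define t where "t B = (if splits_off T (A - B) (restr D (A - B)) B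
      then (prim_proj a B (restr D B) (restr T B) :: 'k) else 0)" for B
  define t1 where "t1 B = (if splits_off T1 (P - B) (restr U (P - B)) B
      then (prim_proj a B (restr U B) (restr T1 B) :: 'k) else 0)" for B
  define NA where "NA = proper_open_nbhds D A a"
  define NP where "NP = proper_open_nbhds U P a"
  have finP: "finite P" using fin A by simp
  have "prim_proj a A D T = (if T = D then 1 else 0) - sum t NA"
    using fin unfolding t_def NA_def by (subst prim_proj.simps) simp
  moreover have "prim_proj a P U T1 = (if T1 = U then 1 else 0) - sum t1 NP"
    using finP unfolding t1_def NP_def by (subst prim_proj.simps) simp
  moreover have "sum t NA = (if c then t1 P + sum t1 NP else 0)"
  proof -
    have NAP: "{B \<in> NA. B \<subseteq> P} = insert P NP" and "P \<notin> NP"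
      unfolding NA_def NP_def U_def using proper_open_nbhds_disjoint_union[OF A dj Q D a]
      by (simp_all add: proper_open_nbhds_def)
    have "t B = 0" if B: "B \<in> NA" "\<not> B \<subseteq> P" for B
    proof -
      have "B \<subset> A" "a \<in> B" using B(1) unfolding NA_def proper_open_nbhds_def by auto
      moreover have "B \<inter> Q \<noteq> {}" using B A unfolding NA_def proper_open_nbhds_def by blast
      ultimately show ?thesis using IH unfolding t_def by simp
    qed
    then have "sum t NA = sum t {B \<in> NA. B \<subseteq> P}"
      by (intro sum.mono_neutral_right) (auto simp: NA_def finite_proper_open_nbhds fin)
    also have "\<dots> = sum (\<lambda>B. if c then t1 B else 0) (insert P NP)"
    proof (rule sum.cong[OF NAP])
      fix B assume "B \<in> insert P NP"
      then have BP: "B \<subseteq> P" unfolding NP_def proper_open_nbhds_def by auto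
      then have "restr D B = restr U B" "restr T B = restr T1 B" "restr (restr D P) (P - B) = restr U (P - B)"
        unfolding U_def T1_def restr_restr by (simp_all add: Int_absorb1)
      then show "t B = (if c then t1 B else 0)"
        unfolding t_def t1_def c_def T1_def splits_off_disjoint_union_iff[OF A dj BP D] by simp
    qed
    also have "\<dots> = (if c then t1 P + sum t1 NP else 0)"
      using \<open>P \<notin> NP\<close> finite_proper_open_nbhds[OF finP] unfolding NP_def by simp
    finally show ?thesis .
  qed
  moreover have "t1 P = prim_proj a P U T1"
    unfolding t1_def splits_off_def T1_def U_def restr_def by auto
  moreover have "T = D \<longleftrightarrow> c \<and> T1 = U"
    unfolding c_def T1_def U_def using D by (rule disjoint_union_eq_iff)
  ultimately show ?thesis by (cases c) auto
qed

lemma prim_proj_disjoint_union: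
  "finite A \<Longrightarrow> A = P \<union> Q \<Longrightarrow> P \<inter> Q = {} \<Longrightarrow> P \<noteq> {} \<Longrightarrow> Q \<noteq> {} \<Longrightarrow>
    D \<subseteq> P \<times> P \<union> Q \<times> Q \<Longrightarrow> a \<in> A \<Longrightarrow> (prim_proj a A D T :: 'k::comm_ring_1) = 0"
proof (induction "card A" arbitrary: A P Q D T rule: less_induct)
  case less
  have IH: "prim_proj a B (restr D B) T' = (0 :: 'k)"
    if "B \<subset> A" "a \<in> B" "B \<inter> P \<noteq> {}" "B \<inter> Q \<noteq> {}" for B T'
  proof (rule less.hyps)
    show "card B < card A" using that(1) less.prems(1) by (rule psubset_card_mono[rotated])
    show "finite B" using that(1) less.prems(1) by (meson finite_subset psubset_imp_subset)
    show "B = (B \<inter> P) \<union> (B \<inter> Q)" using that(1) less.prems(2) by blast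
    show "restr D B \<subseteq> (B \<inter> P) \<times> (B \<inter> P) \<union> (B \<inter> Q) \<times> (B \<inter> Q)"
      using less.prems(6) unfolding restr_def by blast
  qed (use that less.prems(3) in auto)
  show ?case
  proof (cases "a \<in> P")
    case True
    then show ?thesis
      by (intro prim_proj_disjoint_union_step[of A a Q D P]) (use IH less.prems in blast)+
  next
    case False
    then show ?thesis
      by (intro prim_proj_disjoint_union_step[of A a P D Q]) (use IH less.prems in blast)+
  qed
qed

lemma splits_off_top_act:
  assumes inj: "inj_on \<sigma> X" and TU: "T \<subseteq> X \<times> X" "U \<subseteq> X \<times> X" and CB: "C \<subseteq> X" "B \<subseteq> X"
  shows "splits_off (top_act \<sigma> T) (\<sigma> ` C) (top_act \<sigma> U) (\<sigma> ` B) \<longleftrightarrow> splits_off T C U B"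
proof -
  have "top_act \<sigma> (restr T C) = top_act \<sigma> U \<longleftrightarrow> restr T C = U"
    by (rule top_act_inj[OF inj _ TU(2)]) (use CB in \<open>auto simp: restr_def\<close>)
  moreover have "top_act \<sigma> T \<subseteq> top_act \<sigma> (C \<times> C \<union> B \<times> B) \<longleftrightarrow> T \<subseteq> C \<times> C \<union> B \<times> B"
    by (rule top_act_subset_iff[OF inj TU(1)]) (use CB in blast)
  moreover have "restr (top_act \<sigma> T) (\<sigma> ` C) = top_act \<sigma> (restr T C)"
    by (rule top_act_restr[OF inj TU(1) CB(1)])
  moreover have "top_act \<sigma> (C \<times> C \<union> B \<times> B) = \<sigma> ` C \<times> \<sigma> ` C \<union> \<sigma> ` B \<times> \<sigma> ` B"
    by (simp add: top_act_Un top_act_times)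
  ultimately show ?thesis unfolding splits_off_def by simp
qed

lemma proper_open_nbhds_top_act:
  assumes inj: "inj_on \<sigma> X" and S: "S \<subseteq> X \<times> X" and a: "a \<in> X"
  shows "proper_open_nbhds (top_act \<sigma> S) (\<sigma> ` X) (\<sigma> a) = (`) \<sigma> ` proper_open_nbhds S X a"
proof
  show "(`) \<sigma> ` proper_open_nbhds S X a \<subseteq> proper_open_nbhds (top_act \<sigma> S) (\<sigma> ` X) (\<sigma> a)"
    using inj_on_image_eq_iff[OF inj] top_act_upclosed_iff[OF inj S]
    unfolding proper_open_nbhds_def by fastforce
next
  show "proper_open_nbhds (top_act \<sigma> S) (\<sigma> ` X) (\<sigma> a) \<subseteq> (`) \<sigma> ` proper_open_nbhds S X a"
  proof
    fix B' assume "B' \<in> proper_open_nbhds (top_act \<sigma> S) (\<sigma> ` X) (\<sigma> a)"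
    then have B': "B' \<subseteq> \<sigma> ` X" "\<sigma> a \<in> B'" "B' \<noteq> \<sigma> ` X" "upclosed (top_act \<sigma> S) B'"
      unfolding proper_open_nbhds_def by auto
    define B where "B = X \<inter> \<sigma> -` B'"
    have "\<sigma> ` B = B'" "B \<subseteq> X" unfolding B_def using B'(1) by auto
    moreover have "a \<in> B" unfolding B_def using a B'(2) by auto
    moreover have "B \<noteq> X" using \<open>\<sigma> ` B = B'\<close> B'(3) by auto
    moreover have "upclosed S B" using top_act_upclosed_iff[OF inj S \<open>B \<subseteq> X\<close>] B'(4) \<open>\<sigma> ` B = B'\<close> by simp
    ultimately show "B' \<in> (`) \<sigma> ` proper_open_nbhds S X a" unfolding proper_open_nbhds_def by blast
  qed
qed

lemma prim_proj_top_act: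
  "finite X \<Longrightarrow> inj_on \<sigma> X \<Longrightarrow> a \<in> X \<Longrightarrow> S \<subseteq> X \<times> X \<Longrightarrow> T \<subseteq> X \<times> X \<Longrightarrow>
    (prim_proj (\<sigma> a) (\<sigma> ` X) (top_act \<sigma> S) (top_act \<sigma> T) :: 'k::comm_ring_1) = prim_proj a X S T"
proof (induction "card X" arbitrary: X S T rule: less_induct)
  case less
  note fin = less.prems(1) and inj = less.prems(2) and a = less.prems(3)
    and S = less.prems(4) and T = less.prems(5)
  define t where "t B = (if splits_off T (X - B) (restr S (X - B)) B
      then (prim_proj a B (restr S B) (restr T B) :: 'k) else 0)" for B
  define t' where "t' B = (if splits_off (top_act \<sigma> T) (\<sigma> ` X - B) (restr (top_act \<sigma> S) (\<sigma> ` X - B)) B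
      then (prim_proj (\<sigma> a) B (restr (top_act \<sigma> S) B) (restr (top_act \<sigma> T) B) :: 'k) else 0)" for B
  have "t' (\<sigma> ` B) = t B" if B: "B \<in> proper_open_nbhds S X a" for B
  proof -
    have BX: "B \<subseteq> X" "a \<in> B" "B \<noteq> X" using B unfolding proper_open_nbhds_def by auto
    have "card B < card X" using BX fin by (meson psubsetI psubset_card_mono)
    moreover have "finite B" using BX(1) fin by (rule finite_subset)
    moreover have "inj_on \<sigma> B" using inj BX(1) by (rule inj_on_subset)
    ultimately have ih: "prim_proj (\<sigma> a) (\<sigma> ` B) (top_act \<sigma> (restr S B)) (top_act \<sigma> (restr T B)) =
        (prim_proj a B (restr S B) (restr T B) :: 'k)"
      using less.hyps[OF _ _ _ BX(2) restr_subset restr_subset] by blast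
    have U: "restr S (X - B) \<subseteq> X \<times> X" unfolding restr_def by blast
    have "\<sigma> ` X - \<sigma> ` B = \<sigma> ` (X - B)" using inj BX by (simp add: inj_on_image_set_diff)
    moreover have "restr (top_act \<sigma> S) (\<sigma> ` (X - B)) = top_act \<sigma> (restr S (X - B))"
      by (rule top_act_restr[OF inj S]) blast
    moreover have "splits_off (top_act \<sigma> T) (\<sigma> ` (X - B)) (top_act \<sigma> (restr S (X - B))) (\<sigma> ` B)
        \<longleftrightarrow> splits_off T (X - B) (restr S (X - B)) B"
      by (rule splits_off_top_act[OF inj T U _ BX(1)]) blast
    ultimately have "splits_off (top_act \<sigma> T) (\<sigma> ` X - \<sigma> ` B) (restr (top_act \<sigma> S) (\<sigma> ` X - \<sigma> ` B)) (\<sigma> ` B)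
        \<longleftrightarrow> splits_off T (X - B) (restr S (X - B)) B"
      by simp
    then show ?thesis
      unfolding t_def t'_def top_act_restr[OF inj S BX(1)] top_act_restr[OF inj T BX(1)] ih by simp
  qed
  moreover have "inj_on ((`) \<sigma>) (proper_open_nbhds S X a)"
    by (rule inj_on_subset[OF inj_on_image_Pow[OF inj]]) (auto simp: proper_open_nbhds_def)
  ultimately have "sum t' (proper_open_nbhds (top_act \<sigma> S) (\<sigma> ` X) (\<sigma> a)) = sum t (proper_open_nbhds S X a)"
    unfolding proper_open_nbhds_top_act[OF inj S a] by (simp add: sum.reindex)
  moreover have "top_act \<sigma> T = top_act \<sigma> S \<longleftrightarrow> T = S" by (rule top_act_inj[OF inj T S])
  ultimately show ?case
    using fin unfolding t_def t'_def by (subst (1 2) prim_proj.simps) simp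
qed

definition prim_coeff :: "nat set \<Rightarrow> nat rel \<Rightarrow> nat rel \<Rightarrow> 'k::comm_ring_1" where
  "prim_coeff A R T = (\<Sum>a\<in>A. prim_proj a A R T)"

lemma prim_coeff_top_act:
  assumes "finite X" "inj_on \<sigma> X" "S \<subseteq> X \<times> X" "T \<subseteq> X \<times> X"
  shows "(prim_coeff (\<sigma> ` X) (top_act \<sigma> S) (top_act \<sigma> T) :: 'k::comm_ring_1) = prim_coeff X S T"
proof -
  have "(prim_coeff (\<sigma> ` X) (top_act \<sigma> S) (top_act \<sigma> T) :: 'k) =
      (\<Sum>a\<in>X. prim_proj (\<sigma> a) (\<sigma> ` X) (top_act \<sigma> S) (top_act \<sigma> T))"
    unfolding prim_coeff_def by (simp add: sum.reindex[OF assms(2)])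
  also have "\<dots> = prim_coeff X S T"
    unfolding prim_coeff_def by (rule sum.cong[OF refl]) (rule prim_proj_top_act[OF assms(1,2) _ assms(3,4)])
  finally show ?thesis .
qed

text \<open>\<^term>\<open>coprod_coeff x C B U V\<close> is the coefficient of \<open>U \<otimes> V\<close> in \<open>\<Delta>\<^bsub>C,B\<^esub>(x)\<close>.\<close>

definition coprod_coeff :: "(nat rel \<Rightarrow> 'k::comm_ring_1) \<Rightarrow> nat set \<Rightarrow> nat set \<Rightarrow> nat rel \<Rightarrow> nat rel \<Rightarrow> 'k" where
  "coprod_coeff x C B U V = (\<Sum>R\<in>{R\<in>supp x. upclosed R B \<and> restr R C = U \<and> restr R B = V}. x R)"

definition primitive :: "nat set \<Rightarrow> (nat rel \<Rightarrow> 'k::comm_ring_1) \<Rightarrow> bool" where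
  "primitive A x \<longleftrightarrow> (\<forall>B U V. B \<subseteq> A \<longrightarrow> B \<noteq> {} \<longrightarrow> B \<noteq> A \<longrightarrow> coprod_coeff x (A - B) B U V = 0)"

lemma sum_coprod_coeff:
  fixes x :: "nat rel \<Rightarrow> 'k::comm_ring_1"
  assumes fin: "finite (supp x)"
  shows "(\<Sum>R\<in>supp x. if upclosed R B then x R * H (restr R C) (restr R B) else 0) =
    (\<Sum>U\<in>(\<lambda>R. restr R C) ` supp x. \<Sum>V\<in>(\<lambda>R. restr R B) ` supp x. coprod_coeff x C B U V * H U V)"
proof -
  define g where "g R = (restr R C, restr R B)" for R
  define UV where "UV = ((\<lambda>R. restr R C) ` supp x) \<times> ((\<lambda>R. restr R B) ` supp x)"
  have "(\<Sum>R\<in>supp x. if upclosed R B then x R * H (restr R C) (restr R B) else 0) =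
      (\<Sum>R\<in>{R\<in>supp x. upclosed R B}. x R * H (restr R C) (restr R B))"
    using fin by (simp add: sum.inter_filter)
  also have "\<dots> = (\<Sum>p\<in>UV. \<Sum>R\<in>{R\<in>{R\<in>supp x. upclosed R B}. g R = p}. x R * H (restr R C) (restr R B))"
    by (rule sum.group[symmetric]) (auto simp: fin UV_def g_def)
  also have "\<dots> = (\<Sum>p\<in>UV. coprod_coeff x C B (fst p) (snd p) * H (fst p) (snd p))"
  proof (rule sum.cong[OF refl])
    fix p :: "nat rel \<times> nat rel"
    have "{R\<in>{R\<in>supp x. upclosed R B}. g R = p} =
        {R\<in>supp x. upclosed R B \<and> restr R C = fst p \<and> restr R B = snd p}"
      unfolding g_def by (cases p) auto
    then show "(\<Sum>R\<in>{R\<in>{R\<in>supp x. upclosed R B}. g R = p}. x R * H (restr R C) (restr R B)) =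
        coprod_coeff x C B (fst p) (snd p) * H (fst p) (snd p)"
      unfolding coprod_coeff_def sum_distrib_right by (auto intro: sum.cong)
  qed
  also have "\<dots> = (\<Sum>U\<in>(\<lambda>R. restr R C) ` supp x. \<Sum>V\<in>(\<lambda>R. restr R B) ` supp x. coprod_coeff x C B U V * H U V)"
    unfolding UV_def by (simp add: sum.cartesian_product split_beta)
  finally show ?thesis .
qed

lemma prim_proj_primitive:
  fixes x :: "nat rel \<Rightarrow> 'k::comm_ring_1"
  assumes fin: "finite A" and fs: "finite (supp x)" and prim: "primitive A x" and a: "a \<in> A"
  shows "(\<Sum>R\<in>supp x. x R * prim_proj a A R T) = x T"
proof -
  define N where "N = {B. B \<subseteq> A \<and> a \<in> B \<and> B \<noteq> A}"
  define G where "G B U V = (if splits_off T (A - B) U B then (prim_proj a B V (restr T B) :: 'k) else 0)"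
    for B U V
  have finN: "finite N" unfolding N_def using fin by (auto intro: finite_subset[of _ "Pow A"])
  have "x R * prim_proj a A R T = x R * (if T = R then 1 else 0) -
      (\<Sum>B\<in>N. if upclosed R B then x R * G B (restr R (A - B)) (restr R B) else 0)" for R
  proof -
    have "proper_open_nbhds R A a = {B\<in>N. upclosed R B}"
      unfolding N_def proper_open_nbhds_def by auto
    then have "prim_proj a A R T = (if T = R then 1 else 0) -
        (\<Sum>B\<in>N. if upclosed R B then G B (restr R (A - B)) (restr R B) else 0)"
      using fin unfolding G_def by (subst prim_proj.simps) (simp add: sum.inter_filter[OF finN])
    then show ?thesis by (simp add: right_diff_distrib sum_distrib_left if_distrib cong: if_cong)
  qed
  then have "(\<Sum>R\<in>supp x. x R * prim_proj a A R T) = (\<Sum>R\<in>supp x. x R * (if T = R then 1 else 0)) -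
      (\<Sum>B\<in>N. \<Sum>R\<in>supp x. if upclosed R B then x R * G B (restr R (A - B)) (restr R B) else 0)"
    by (simp add: sum_subtractf sum.swap[of _ N])
  also have "(\<Sum>B\<in>N. \<Sum>R\<in>supp x. if upclosed R B then x R * G B (restr R (A - B)) (restr R B) else 0) = 0"
  proof (rule sum.neutral, rule ballI)
    fix B assume "B \<in> N"
    then have "coprod_coeff x (A - B) B U V = 0" for U V
      using prim a unfolding primitive_def N_def by blast
    then show "(\<Sum>R\<in>supp x. if upclosed R B then x R * G B (restr R (A - B)) (restr R B) else 0) = 0"
      using sum_coprod_coeff[OF fs, of B "G B" "A - B"] by simp
  qed
  also have "(\<Sum>R\<in>supp x. x R * (if T = R then 1 else 0)) = x T"
    using fs by (cases "T \<in> supp x") (auto simp: supp_def if_distrib sum.delta' cong: if_cong)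
  finally show ?thesis by simp
qed

section \<open>The isomorphism\<close>

fun no_backward :: "nat rel \<Rightarrow> nat set list \<Rightarrow> bool" where
  "no_backward R [] = True"
| "no_backward R (X # Xs) \<longleftrightarrow> (\<forall>Y\<in>set Xs. R \<inter> (Y \<times> X) = {}) \<and> no_backward R Xs"

definition indec_coeff :: "nat set \<Rightarrow> nat rel \<Rightarrow> nat \<Rightarrow> 'k::comm_ring_1" where
  "indec_coeff X S b = (if b \<in> indec_labels X then prim_coeff X S (rel_decode b) else 0)"

text \<open>\<open>\<Delta>\<^sup>(\<^sup>k\<^sup>-\<^sup>1\<^sup>)(R)\<close> has the term \<open>R|\<^bsub>A\<^sub>1\<^esub> \<otimes> \<dots> \<otimes> R|\<^bsub>A\<^sub>k\<^esub>\<close> exactly when no relation of \<open>R\<close>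
  goes from a later block to an earlier one, and \<^term>\<open>indec_coeff X S b\<close> is the \<open>b\<close>-coordinate
  of \<open>p\<pi>(S)\<close>.\<close>

definition top_to_cot :: "nat set \<Rightarrow> nat rel \<Rightarrow> word \<Rightarrow> 'k::comm_ring_1" where
  "top_to_cot A R w = (if w \<in> cot_basis indec_labels A \<and> no_backward R (map fst w)
     then prod_list (map (\<lambda>(X, b). indec_coeff X (restr R X) b) w) else 0)"

lemma no_backward_append:
  "no_backward R (Xs @ Ys) \<longleftrightarrow>
    no_backward R Xs \<and> no_backward R Ys \<and> (\<forall>X\<in>set Xs. \<forall>Y\<in>set Ys. R \<inter> (Y \<times> X) = {})"
  by (induction Xs) auto

lemma no_backward_restr: "\<forall>X\<in>set Xs. X \<subseteq> A \<Longrightarrow> no_backward (restr R A) Xs \<longleftrightarrow> no_backward R Xs"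
proof (induction Xs)
  case (Cons X Xs)
  have "restr R A \<inter> (Y \<times> X) = R \<inter> (Y \<times> X)" if "Y \<in> set Xs" for Y
    using Cons.prems that unfolding restr_def by auto
  then show ?case using Cons by auto
qed simp

lemma top_to_cot_empty: "(top_to_cot {} {} :: word \<Rightarrow> 'k::comm_ring_1) = delta_vec []"
  unfolding top_to_cot_def cot_basis_empty delta_vec_def by (rule ext) auto

lemma supp_top_to_cot: "supp (top_to_cot A R) \<subseteq> cot_basis indec_labels A"
  unfolding supp_def top_to_cot_def by auto

lemma finite_cot_basis_indec: "finite A \<Longrightarrow> finite (cot_basis indec_labels A)"
  using finite_cot_basis finite_indec_labels by blast

lemma finsupp_top_to_cot: "finite A \<Longrightarrow> finsupp_on (cot_basis indec_labels A) (top_to_cot A R)"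
  unfolding finsupp_on_def using supp_top_to_cot finite_cot_basis_indec finite_subset by blast

lemma top_to_cot_append:
  assumes AB: "A \<inter> B = {}" and R: "R \<in> top_basis (A \<union> B)"
    and u: "u \<in> cot_basis indec_labels A" and v: "v \<in> cot_basis indec_labels B"
  shows "(top_to_cot (A \<union> B) R (u @ v) :: 'k::comm_ring_1) =
     (if upclosed R B then top_to_cot A (restr R A) u * top_to_cot B (restr R B) v else 0)"
proof -
  have uA: "\<forall>X\<in>set (map fst u). X \<subseteq> A" and UA: "\<Union>(set (map fst u)) = A"
    using u unfolding cot_basis_def set_composition_iff by auto
  have vB: "\<forall>X\<in>set (map fst v). X \<subseteq> B" and UB: "\<Union>(set (map fst v)) = B"
    using v unfolding cot_basis_def set_composition_iff by auto
  have "(\<forall>X\<in>set (map fst u). \<forall>Y\<in>set (map fst v). R \<inter> (Y \<times> X) = {}) \<longleftrightarrow> R \<inter> (B \<times> A) = {}"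
    using UA UB by blast
  also have "\<dots> \<longleftrightarrow> upclosed R B"
    using top_basis_subset[OF R] AB unfolding upclosed_def by blast
  finally have nb: "no_backward R (map fst (u @ v)) \<longleftrightarrow>
      no_backward (restr R A) (map fst u) \<and> no_backward (restr R B) (map fst v) \<and> upclosed R B"
    using no_backward_append no_backward_restr[OF uA] no_backward_restr[OF vB] by auto
  have pu: "map (\<lambda>(X, b). indec_coeff X (restr R X) b) u =
      map (\<lambda>(X, b). (indec_coeff X (restr (restr R A) X) b :: 'k)) u"
    using uA by (auto simp: restr_restr Int_absorb1)
  have pv: "map (\<lambda>(X, b). indec_coeff X (restr R X) b) v =
      map (\<lambda>(X, b). (indec_coeff X (restr (restr R B) X) b :: 'k)) v"
    using vB by (auto simp: restr_restr Int_absorb1)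
  show ?thesis
    using cot_basis_append[OF u v AB] u v nb unfolding top_to_cot_def by (simp add: pu pv)
qed

lemma no_backward_shuffles:
  assumes AB: "A \<inter> B = {}" and R: "R \<subseteq> A \<times> A" and S: "S \<subseteq> B \<times> B"
  shows "Ws \<in> shuffles Xs Ys \<Longrightarrow> \<forall>X\<in>set Xs. X \<subseteq> A \<Longrightarrow> \<forall>Y\<in>set Ys. Y \<subseteq> B \<Longrightarrow>
    no_backward (R \<union> S) Ws \<longleftrightarrow> no_backward R Xs \<and> no_backward S Ys"
proof (induction Xs Ys arbitrary: Ws rule: shuffles.induct)
  case (1 Ys)
  have "restr (R \<union> S) B = S" using AB R S unfolding restr_def by blast
  then show ?case using no_backward_restr[OF "1.prems"(3), of "R \<union> S"] "1.prems"(1) by simp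
next
  case (2 Xs)
  have "restr (R \<union> S) A = R" using AB R S unfolding restr_def by blast
  then show ?case using no_backward_restr[OF "2.prems"(2), of "R \<union> S"] "2.prems"(1) by simp
next
  case (3 X Xs Y Ys)
  have XA: "X \<subseteq> A" and YB: "Y \<subseteq> B" using "3.prems"(2,3) by auto
  have RS: "(R \<union> S) \<inter> (Z \<times> X) = R \<inter> (Z \<times> X)" "(R \<union> S) \<inter> (Z \<times> Y) = S \<inter> (Z \<times> Y)"
    "Z \<subseteq> B \<Longrightarrow> R \<inter> (Z \<times> X) = {}" "Z \<subseteq> A \<Longrightarrow> S \<inter> (Z \<times> Y) = {}" for Z
    using XA YB AB R S by blast+
  consider (left) Ws' where "Ws = X # Ws'" "Ws' \<in> shuffles Xs (Y # Ys)"
    | (right) Ws' where "Ws = Y # Ws'" "Ws' \<in> shuffles (X # Xs) Ys"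
    using "3.prems"(1) by auto
  then show ?case
  proof cases
    case left
    have "\<forall>Z\<in>set (Y # Ys). R \<inter> (Z \<times> X) = {}" using RS(3) "3.prems"(3) by blast
    then have "(\<forall>Z\<in>set Ws'. (R \<union> S) \<inter> (Z \<times> X) = {}) \<longleftrightarrow> (\<forall>Z\<in>set Xs. R \<inter> (Z \<times> X) = {})"
      using set_shuffles[OF left(2)] RS(1) by auto
    then show ?thesis using "3.IH"(1)[OF left(2)] "3.prems"(2,3) left(1) by auto
  next
    case right
    have "\<forall>Z\<in>set (X # Xs). S \<inter> (Z \<times> Y) = {}" using RS(4) "3.prems"(2) by blast
    then have "(\<forall>Z\<in>set Ws'. (R \<union> S) \<inter> (Z \<times> Y) = {}) \<longleftrightarrow> (\<forall>Z\<in>set Ys. S \<inter> (Z \<times> Y) = {})"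
      using set_shuffles[OF right(2)] RS(2) by auto
    then show ?thesis using "3.IH"(2)[OF right(2)] "3.prems"(2,3) right(1) by auto
  qed
qed

lemma indec_coeff_disjoint_union:
  assumes "finite X" "X \<inter> A \<noteq> {}" "X \<inter> B \<noteq> {}" "X \<subseteq> A \<union> B" "A \<inter> B = {}"
    and "R \<subseteq> A \<times> A" "S \<subseteq> B \<times> B"
  shows "(indec_coeff X (restr (R \<union> S) X) b :: 'k::comm_ring_1) = 0"
proof -
  have "(prim_proj a X (restr (R \<union> S) X) (rel_decode b) :: 'k) = 0" if "a \<in> X" for a
    by (rule prim_proj_disjoint_union[of X "X \<inter> A" "X \<inter> B"]) (use assms that in \<open>auto simp: restr_def\<close>)
  then show ?thesis unfolding indec_coeff_def prim_coeff_def by simp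
qed

lemma top_to_cot_disjoint_union_nonzero:
  assumes AB: "A \<inter> B = {}" and R: "R \<in> top_basis A" and S: "S \<in> top_basis B"
    and nz: "(top_to_cot (A \<union> B) (R \<union> S) w :: 'k::comm_ring_1) \<noteq> 0"
  shows "filter (\<lambda>p. fst p \<subseteq> A) w \<in> cot_basis indec_labels A \<and>
    filter (\<lambda>p. \<not> fst p \<subseteq> A) w \<in> cot_basis indec_labels B"
proof -
  have w: "w \<in> cot_basis indec_labels (A \<union> B)"
    and pr: "prod_list (map (\<lambda>(X, b). (indec_coeff X (restr (R \<union> S) X) b :: 'k)) w) \<noteq> 0"
    using nz unfolding top_to_cot_def by (auto split: if_splits)
  have "X \<subseteq> A \<or> X \<subseteq> B" if X: "(X, b) \<in> set w" for X b
  proof (rule ccontr)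
    assume X': "\<not> (X \<subseteq> A \<or> X \<subseteq> B)"
    obtain xs ys where "w = xs @ (X, b) # ys" using split_list[OF X] by blast
    then have "(indec_coeff X (restr (R \<union> S) X) b :: 'k) \<noteq> 0" using pr by auto
    moreover have "X \<subseteq> A \<union> B" "finite X" using cot_basis_blocks[OF w X] by auto
    moreover from this have "X \<inter> A \<noteq> {}" "X \<inter> B \<noteq> {}" using X' by blast+
    ultimately show False
      using indec_coeff_disjoint_union[OF _ _ _ _ AB top_basis_subset[OF R] top_basis_subset[OF S]] by blast
  qed
  then show ?thesis using cot_basis_partition[OF w AB] by fastforce
qed

lemma top_to_cot_disjoint_union:
  assumes fin: "finite A" "finite B" and AB: "A \<inter> B = {}"
    and R: "R \<in> top_basis A" and S: "S \<in> top_basis B"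
  shows "(top_to_cot (A \<union> B) (R \<union> S) :: word \<Rightarrow> 'k::comm_ring_1) =
    shuffle_prod (top_to_cot A R) (top_to_cot B S)"
proof
  fix w :: word
  define u0 where "u0 = filter (\<lambda>p. fst p \<subseteq> A) w"
  define v0 where "v0 = filter (\<lambda>p. \<not> fst p \<subseteq> A) w"
  have sh: "w \<in> shuffles u0 v0" unfolding u0_def v0_def by (rule partition_in_shuffles)
  have "u = u0 \<and> v = v0"
    if "u \<in> cot_basis indec_labels A" "v \<in> cot_basis indec_labels B" "w \<in> shuffles u v" for u v
    using shuffles_cot_basis_filter[OF AB that] unfolding u0_def v0_def by blast
  then have prod: "shuffle_prod (top_to_cot A R) (top_to_cot B S) w =
      (top_to_cot A R u0 * top_to_cot B S v0 :: 'k)"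
    using shuffle_prod_eq_single[OF _ _ sh] supp_top_to_cot finsupp_top_to_cot[OF fin(1)]
      finsupp_top_to_cot[OF fin(2)] unfolding finsupp_on_def by blast
  show "(top_to_cot (A \<union> B) (R \<union> S) w :: 'k) = shuffle_prod (top_to_cot A R) (top_to_cot B S) w"
  proof (cases "u0 \<in> cot_basis indec_labels A \<and> v0 \<in> cot_basis indec_labels B")
    case False
    have "(top_to_cot (A \<union> B) (R \<union> S) w :: 'k) = 0"
      using top_to_cot_disjoint_union_nonzero[OF AB R S] False unfolding u0_def v0_def by blast
    moreover have "(top_to_cot A R u0 * top_to_cot B S v0 :: 'k) = 0"
      using False unfolding top_to_cot_def by auto
    ultimately show ?thesis using prod by simp
  next
    case True
    have uA: "\<forall>X\<in>set (map fst u0). X \<subseteq> A" and vB: "\<forall>X\<in>set (map fst v0). X \<subseteq> B"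
      using True cot_basis_blocks_subset by blast+
    have RS: "R \<subseteq> A \<times> A" "S \<subseteq> B \<times> B" using R S top_basis_subset by auto
    have "restr (R \<union> S) X = restr R X" if "X \<subseteq> A" for X
      using that RS AB unfolding restr_def by blast
    then have pu: "map (\<lambda>(X, b). indec_coeff X (restr (R \<union> S) X) b) u0 =
        map (\<lambda>(X, b). (indec_coeff X (restr R X) b :: 'k)) u0"
      using uA by (intro map_cong) auto
    have "restr (R \<union> S) X = restr S X" if "X \<subseteq> B" for X
      using that RS AB unfolding restr_def by blast
    then have pv: "map (\<lambda>(X, b). indec_coeff X (restr (R \<union> S) X) b) v0 =
        map (\<lambda>(X, b). (indec_coeff X (restr S X) b :: 'k)) v0"
      using vB by (intro map_cong) auto
    show ?thesis
      using prod shuffles_cot_basis[OF AB _ _ sh] True no_backward_shuffles[OF AB RS map_shuffles[OF sh] uA vB]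
      unfolding top_to_cot_def by (simp add: prod_list_shuffles[OF sh] pu pv)
  qed
qed

definition word_act :: "(nat \<Rightarrow> nat) \<Rightarrow> word \<Rightarrow> word" where
  "word_act \<sigma> w = map (\<lambda>(X, b). (\<sigma> ` X, rel_encode (top_act \<sigma> (rel_decode b)))) w"

lemma map_fst_word_act: "map fst (word_act \<sigma> w) = map ((`) \<sigma>) (map fst w)"
  unfolding word_act_def by (induction w) auto

lemma word_act_cot_basis:
  assumes bij: "bij_betw \<sigma> A A'" and w: "w \<in> cot_basis indec_labels A"
  shows "word_act \<sigma> w \<in> cot_basis indec_labels A'"
proof -
  have inj: "inj_on \<sigma> A" and img: "\<sigma> ` A = A'"
    using bij unfolding bij_betw_def by blast+
  have sc: "set_composition A (map fst w)" using w unfolding cot_basis_def by blast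
  then have ne: "\<forall>X\<in>set (map fst w). finite X \<and> X \<noteq> {}" and d: "distinct (map fst w)"
    and dj: "\<forall>X\<in>set (map fst w). \<forall>Y\<in>set (map fst w). X \<noteq> Y \<longrightarrow> X \<inter> Y = {}"
    and u: "\<Union>(set (map fst w)) = A"
    unfolding set_composition_iff by blast+
  have sub: "set (map fst w) \<subseteq> Pow A" using u by blast
  have injP: "inj_on ((`) \<sigma>) (set (map fst w))"
    using inj_on_subset[OF inj_on_image_Pow[OF inj] sub] .
  have "\<sigma> ` X \<inter> \<sigma> ` Y = {}"
    if XY: "X \<in> set (map fst w)" "Y \<in> set (map fst w)" "\<sigma> ` X \<noteq> \<sigma> ` Y" for X Y
  proof -
    have "X \<noteq> Y" "X \<subseteq> A" "Y \<subseteq> A" using XY sub by auto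
    then have "X \<inter> Y = {}" using dj XY(1,2) by blast
    then show ?thesis using inj_on_image_Int[OF inj \<open>X \<subseteq> A\<close> \<open>Y \<subseteq> A\<close>] by simp
  qed
  moreover have "distinct (map ((`) \<sigma>) (map fst w))" using d injP distinct_map by blast
  ultimately have "set_composition A' (map ((`) \<sigma>) (map fst w))"
    unfolding set_composition_iff using ne u img by auto
  moreover have "\<forall>(X, b)\<in>set (word_act \<sigma> w). b \<in> indec_labels X"
  proof
    fix q assume "q \<in> set (word_act \<sigma> w)"
    then obtain X b where q: "(X, b) \<in> set w" "q = (\<sigma> ` X, rel_encode (top_act \<sigma> (rel_decode b)))"
      unfolding word_act_def by auto
    have "X \<subseteq> A" and b: "b \<in> indec_labels X" using cot_basis_blocks[OF w q(1)] by auto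
    then have "bij_betw \<sigma> X (\<sigma> ` X)" using inj_on_subset[OF inj] inj_on_imp_bij_betw by blast
    then have "rel_encode (top_act \<sigma> (rel_decode b)) \<in> indec_labels (\<sigma> ` X)"
      using indec_labels_act(1) b by blast
    then show "case q of (X, b) \<Rightarrow> b \<in> indec_labels X" using q(2) by simp
  qed
  ultimately show ?thesis unfolding cot_basis_def mem_Collect_eq map_fst_word_act by blast
qed

lemma word_act_cancel:
  assumes inj: "inj_on \<sigma> A" and inv: "\<forall>x\<in>A. \<tau> (\<sigma> x) = x" and w: "w \<in> cot_basis indec_labels A"
  shows "word_act \<tau> (word_act \<sigma> w) = w"
proof -
  have "word_act \<tau> (word_act \<sigma> w) = map id w"
    unfolding word_act_def map_map
  proof (rule map_cong[OF refl])
    fix p assume p: "p \<in> set w"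
    obtain X b where Xb: "p = (X, b)" by fastforce
    have XA: "X \<subseteq> A" and b: "b \<in> indec_labels X" using cot_basis_blocks[OF w p[unfolded Xb]] by auto
    have T: "rel_decode b \<in> top_basis X" "rel_encode (rel_decode b) = b" and "finite X"
      using indec_labelsD[OF b] by auto
    then have "finite (rel_decode b)" using finite_top_basis_rel by blast
    then have "rel_decode (rel_encode (top_act \<sigma> (rel_decode b))) = top_act \<sigma> (rel_decode b)"
      using rel_decode_encode[OF finite_top_act] by blast
    moreover have "top_act \<tau> (top_act \<sigma> (rel_decode b)) = rel_decode b"
    proof -
      have "top_act \<tau> (top_act \<sigma> (rel_decode b)) = top_act (\<tau> \<circ> \<sigma>) (rel_decode b)"
        by (simp add: top_act_comp)
      also have "\<dots> = top_act id (rel_decode b)"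
        using inv XA top_basis_subset[OF T(1)] by (intro top_act_cong[of A]) auto
      finally show ?thesis by (simp add: top_act_id)
    qed
    moreover have "\<tau> ` \<sigma> ` X = X" using inv XA by (force simp: image_image)
    ultimately show "((\<lambda>(X, b). (\<tau> ` X, rel_encode (top_act \<tau> (rel_decode b)))) \<circ>
        (\<lambda>(X, b). (\<sigma> ` X, rel_encode (top_act \<sigma> (rel_decode b))))) p = id p"
      using Xb T(2) by simp
  qed
  then show ?thesis by simp
qed

lemma no_backward_top_act:
  assumes inj: "inj_on \<sigma> A" and R: "R \<subseteq> A \<times> A"
  shows "\<forall>X\<in>set Xs. X \<subseteq> A \<Longrightarrow> no_backward (top_act \<sigma> R) (map ((`) \<sigma>) Xs) \<longleftrightarrow> no_backward R Xs"
proof (induction Xs)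
  case (Cons X Xs)
  have "top_act \<sigma> R \<inter> (\<sigma> ` Y \<times> \<sigma> ` X) = {} \<longleftrightarrow> R \<inter> (Y \<times> X) = {}" if "Y \<in> set Xs" for Y
  proof -
    have "Y \<times> X \<subseteq> A \<times> A" using Cons.prems that by auto
    then have "top_act \<sigma> R \<inter> (\<sigma> ` Y \<times> \<sigma> ` X) = top_act \<sigma> (R \<inter> (Y \<times> X))"
      using top_act_Int[OF inj R] by (simp add: top_act_times)
    then show ?thesis unfolding top_act_def by simp
  qed
  then show ?case using Cons by auto
qed simp

lemma top_to_cot_word_act:
  assumes bij: "bij_betw \<sigma> A A'" and R: "R \<in> top_basis A" and w: "w \<in> cot_basis indec_labels A"
  shows "(top_to_cot A' (top_act \<sigma> R) (word_act \<sigma> w) :: 'k::comm_ring_1) = top_to_cot A R w"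
proof -
  have inj: "inj_on \<sigma> A" using bij by (rule bij_betw_imp_inj_on)
  have RA: "R \<subseteq> A \<times> A" using R by (rule top_basis_subset)
  have "no_backward (top_act \<sigma> R) (map fst (word_act \<sigma> w)) \<longleftrightarrow> no_backward R (map fst w)"
    unfolding map_fst_word_act using no_backward_top_act[OF inj RA cot_basis_blocks_subset[OF w]] .
  moreover have "indec_coeff (\<sigma> ` X) (restr (top_act \<sigma> R) (\<sigma> ` X)) (rel_encode (top_act \<sigma> (rel_decode b))) =
      (indec_coeff X (restr R X) b :: 'k)" if "(X, b) \<in> set w" for X b
  proof -
    have XA: "X \<subseteq> A" and b: "b \<in> indec_labels X" and "finite X"
      using cot_basis_blocks[OF w that] by auto
    have injX: "inj_on \<sigma> X" using inj XA by (rule inj_on_subset)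
    then have "bij_betw \<sigma> X (\<sigma> ` X)" by (rule inj_on_imp_bij_betw)
    note b' = indec_labels_act[OF this b]
    have "indec_coeff (\<sigma> ` X) (restr (top_act \<sigma> R) (\<sigma> ` X)) (rel_encode (top_act \<sigma> (rel_decode b))) =
        (prim_coeff (\<sigma> ` X) (top_act \<sigma> (restr R X)) (top_act \<sigma> (rel_decode b)) :: 'k)"
      unfolding indec_coeff_def using b' top_act_restr[OF inj RA XA] by simp
    also have "\<dots> = prim_coeff X (restr R X) (rel_decode b)"
      using prim_coeff_top_act[OF \<open>finite X\<close> injX restr_subset top_basis_subset[OF indec_labelsD(2)[OF b]]] .
    also have "\<dots> = indec_coeff X (restr R X) b" unfolding indec_coeff_def using b by simp
    finally show ?thesis .
  qed
  then have "map (\<lambda>(X, b). indec_coeff X (restr (top_act \<sigma> R) X) b) (word_act \<sigma> w) =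
      map (\<lambda>(X, b). (indec_coeff X (restr R X) b :: 'k)) w"
    unfolding word_act_def by auto
  ultimately show ?thesis
    unfolding top_to_cot_def using w word_act_cot_basis[OF bij w] by simp
qed

lemma cot_act_word_act:
  assumes w: "w \<in> cot_basis indec_labels A"
  shows "(cot_act indec_act \<sigma> w :: word \<Rightarrow> 'k::comm_ring_1) = delta_vec (word_act \<sigma> w)"
proof
  fix w' :: word
  have mf: "map (\<lambda>p. \<sigma> ` fst p) w = map fst (word_act \<sigma> w)" unfolding word_act_def by auto
  have factor: "(indec_act \<sigma> (fst (w ! i)) (snd (w ! i)) (snd (w' ! i)) :: 'k) =
      (if snd (w' ! i) = snd (word_act \<sigma> w ! i) then 1 else 0)" if "i < length w" for i
  proof -
    have "snd (w ! i) \<in> indec_labels (fst (w ! i))"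
      using cot_basis_blocks(4)[OF w, of "fst (w ! i)" "snd (w ! i)"] that by simp
    then show ?thesis unfolding indec_act_def delta_vec_def word_act_def using that by (simp add: split_beta)
  qed
  show "(cot_act indec_act \<sigma> w w' :: 'k) = delta_vec (word_act \<sigma> w) w'"
  proof (cases "map fst w' = map fst (word_act \<sigma> w)")
    case False
    then show ?thesis unfolding cot_act_def mf delta_vec_def by auto
  next
    case True
    then have len: "length w' = length w" by (metis length_map word_act_def)
    have "w' = word_act \<sigma> w \<longleftrightarrow> (\<forall>i<length w. snd (w' ! i) = snd (word_act \<sigma> w ! i))"
      using True len by (metis (no_types, lifting) length_map nth_equalityI nth_map prod_eq_iff)
    moreover have "(\<Prod>i<length w. (if snd (w' ! i) = snd (word_act \<sigma> w ! i) then 1 else 0 :: 'k)) =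
        (if \<forall>i<length w. snd (w' ! i) = snd (word_act \<sigma> w ! i) then 1 else 0)"
    proof (cases "\<forall>i<length w. snd (w' ! i) = snd (word_act \<sigma> w ! i)")
      case False
      then obtain i where "i < length w" "snd (w' ! i) \<noteq> snd (word_act \<sigma> w ! i)" by blast
      then show ?thesis using False by (intro trans[OF prod_zero]) auto
    qed simp
    ultimately show ?thesis unfolding cot_act_def mf delta_vec_def using True factor by simp
  qed
qed

lemma word_act_bij_betw:
  assumes bij: "bij_betw \<sigma> A A'"
  shows "bij_betw (word_act \<sigma>) (cot_basis indec_labels A) (cot_basis indec_labels A')"
proof (rule bij_betw_byWitness[where f' = "word_act (inv_into A \<sigma>)"])
  have inj: "inj_on \<sigma> A" using bij by (rule bij_betw_imp_inj_on)
  have bij': "bij_betw (inv_into A \<sigma>) A' A" using bij by (rule bij_betw_inv_into)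
  have "\<forall>x\<in>A. inv_into A \<sigma> (\<sigma> x) = x" using inj by simp
  then show "\<forall>w\<in>cot_basis indec_labels A. word_act (inv_into A \<sigma>) (word_act \<sigma> w) = w"
    by (intro ballI) (rule word_act_cancel[OF inj])
  have "\<sigma> ` A = A'" using bij by (rule bij_betw_imp_surj_on)
  then have "\<forall>y\<in>A'. \<sigma> (inv_into A \<sigma> y) = y" by (auto intro: f_inv_into_f)
  then show "\<forall>w\<in>cot_basis indec_labels A'. word_act \<sigma> (word_act (inv_into A \<sigma>) w) = w"
    by (intro ballI) (rule word_act_cancel[OF bij_betw_imp_inj_on[OF bij']])
  show "word_act \<sigma> ` cot_basis indec_labels A \<subseteq> cot_basis indec_labels A'"
    using word_act_cot_basis[OF bij] by blast
  show "word_act (inv_into A \<sigma>) ` cot_basis indec_labels A' \<subseteq> cot_basis indec_labels A"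
    using word_act_cot_basis[OF bij'] by blast
qed

lemma top_to_cot_top_act:
  assumes fin: "finite A" and bij: "bij_betw \<sigma> A A'" and R: "R \<in> top_basis A"
  shows "(top_to_cot A' (top_act \<sigma> R) :: word \<Rightarrow> 'k::comm_ring_1) =
    lincomb (top_to_cot A R) (cot_act indec_act \<sigma>)"
proof
  fix w'
  let ?\<phi> = "top_to_cot A R :: word \<Rightarrow> 'k"
  have fs: "finite (supp ?\<phi>)" using finsupp_top_to_cot[OF fin] unfolding finsupp_on_def by blast
  have "lincomb ?\<phi> (cot_act indec_act \<sigma>) = lincomb ?\<phi> (\<lambda>w. delta_vec (word_act \<sigma> w))"
    by (rule lincomb_cong) (use cot_act_word_act supp_top_to_cot in blast)
  then have lc: "lincomb ?\<phi> (cot_act indec_act \<sigma>) w' = (\<Sum>w\<in>{w\<in>supp ?\<phi>. word_act \<sigma> w = w'}. ?\<phi> w)"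
    using lincomb_delta_vec_comp[OF fs, of "word_act \<sigma>" w'] by simp
  note wbij = word_act_bij_betw[OF bij]
  show "(top_to_cot A' (top_act \<sigma> R) w' :: 'k) = lincomb ?\<phi> (cot_act indec_act \<sigma>) w'"
  proof (cases "w' \<in> cot_basis indec_labels A'")
    case True
    moreover have "cot_basis indec_labels A' = word_act \<sigma> ` cot_basis indec_labels A"
      using wbij unfolding bij_betw_def by simp
    ultimately obtain w0 where w0: "w0 \<in> cot_basis indec_labels A" "word_act \<sigma> w0 = w'" by auto
    have "w = w0" if "w \<in> supp ?\<phi>" "word_act \<sigma> w = w'" for w
    proof -
      have "w \<in> cot_basis indec_labels A" using that(1) supp_top_to_cot by blast
      then show ?thesis using inj_onD[OF bij_betw_imp_inj_on[OF wbij] _ _ w0(1)] that(2) w0(2) by simp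
    qed
    then have "{w\<in>supp ?\<phi>. word_act \<sigma> w = w'} = {w0} \<inter> supp ?\<phi>" using w0(2) by blast
    moreover have "(\<Sum>w\<in>{w0} \<inter> supp ?\<phi>. ?\<phi> w) = ?\<phi> w0"
      by (cases "w0 \<in> supp ?\<phi>") (simp_all add: supp_def)
    moreover have "(top_to_cot A' (top_act \<sigma> R) w' :: 'k) = ?\<phi> w0"
      using top_to_cot_word_act[OF bij R w0(1)] unfolding w0(2) .
    ultimately show ?thesis using lc by simp
  next
    case False
    then have empty: "{w\<in>supp ?\<phi>. word_act \<sigma> w = w'} = {}"
      using word_act_cot_basis[OF bij] supp_top_to_cot by blast
    have "(top_to_cot A' (top_act \<sigma> R) w' :: 'k) = 0"
      using False unfolding top_to_cot_def by simp
    then show ?thesis using lc unfolding empty by simp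
  qed
qed

fun ordinal_sum :: "word \<Rightarrow> nat rel" where
  "ordinal_sum [] = {}"
| "ordinal_sum ((X, b) # w) = rel_decode b \<union> X \<times> (\<Union>(fst ` set w)) \<union> ordinal_sum w"

lemma top_basis_ordinal_sum_pair:
  assumes T: "T \<in> top_basis X" and S: "S \<in> top_basis Y" and XY: "X \<inter> Y = {}"
  shows "T \<union> X \<times> Y \<union> S \<in> top_basis (X \<union> Y)"
proof -
  have TX: "T \<subseteq> X \<times> X" and SY: "S \<subseteq> Y \<times> Y" using T S by (blast dest: top_basis_subset)+
  have "trans T" "trans S" "\<forall>x\<in>X. (x, x) \<in> T" "\<forall>y\<in>Y. (y, y) \<in> S"
    using T S unfolding top_basis_def quasi_poset_on_def by auto
  moreover have "trans (T \<union> X \<times> Y \<union> S)"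
  proof (rule transI)
    fix x y z assume "(x, y) \<in> T \<union> X \<times> Y \<union> S" "(y, z) \<in> T \<union> X \<times> Y \<union> S"
    then consider "(x, y) \<in> T" "(y, z) \<in> T" | "x \<in> X" "z \<in> Y" | "(x, y) \<in> S" "(y, z) \<in> S"
      using TX SY XY by blast
    then show "(x, z) \<in> T \<union> X \<times> Y \<union> S"
      by cases (use \<open>trans T\<close> \<open>trans S\<close> in \<open>blast dest: transD\<close>)+
  qed
  ultimately show ?thesis using TX SY unfolding top_basis_def quasi_poset_on_def by blast
qed

lemma ordinal_sum_top_basis: "w \<in> cot_basis indec_labels A \<Longrightarrow> ordinal_sum w \<in> top_basis A"
proof (induction w arbitrary: A)
  case Nil
  then have "A = {}" unfolding cot_basis_def set_composition_iff by auto
  then show ?case by (simp add: top_basis_empty)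
next
  case (Cons p w)
  obtain X b where p: "p = (X, b)" by fastforce
  note cb = cot_basis_Cons[OF Cons.prems[unfolded p]]
  have "rel_decode b \<union> X \<times> (A - X) \<union> ordinal_sum w \<in> top_basis (X \<union> (A - X))"
    using top_basis_ordinal_sum_pair[OF indec_labelsD(2)[OF cb(4)] Cons.IH[OF cb(1)]] by blast
  then show ?case using cb(2,5) p by (simp add: Un_absorb1)
qed

lemma ordinal_sum_Cons:
  assumes w: "(X, b) # w \<in> cot_basis indec_labels A" and R: "R = ordinal_sum ((X, b) # w)"
  shows "restr R X = rel_decode b" "restr R (A - X) = ordinal_sum w" "X \<times> (A - X) \<subseteq> R"
    "\<And>p q. (p, q) \<in> R \<Longrightarrow> p \<in> A - X \<Longrightarrow> q \<in> A - X"
proof -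
  note cb = cot_basis_Cons[OF w]
  have T: "rel_decode b \<in> top_basis X" using indec_labelsD(2)[OF cb(4)] .
  have TX: "rel_decode b \<subseteq> X \<times> X" using top_basis_subset[OF T] .
  have RY: "ordinal_sum w \<subseteq> (A - X) \<times> (A - X)" using top_basis_subset[OF ordinal_sum_top_basis[OF cb(1)]] .
  have RR: "R = rel_decode b \<union> X \<times> (A - X) \<union> ordinal_sum w" using R cb(5) by simp
  show "restr R X = rel_decode b" unfolding RR restr_def using TX RY by blast
  show "restr R (A - X) = ordinal_sum w" unfolding RR restr_def using TX RY by blast
  show "X \<times> (A - X) \<subseteq> R" unfolding RR by blast
  show "\<And>p q. (p, q) \<in> R \<Longrightarrow> p \<in> A - X \<Longrightarrow> q \<in> A - X" unfolding RR using TX RY by blast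
qed

lemma ordinal_sum_first_block:
  assumes w1: "(X1, b1) # w1 \<in> cot_basis indec_labels A" and w2: "(X2, b2) # w2 \<in> cot_basis indec_labels A"
    and eq: "ordinal_sum ((X1, b1) # w1) = ordinal_sum ((X2, b2) # w2)" and sub: "X2 \<subseteq> X1"
  shows "X1 = X2"
proof (rule ccontr)
  assume ne: "X1 \<noteq> X2"
  define R where "R = ordinal_sum ((X1, b1) # w1)"
  note f1 = ordinal_sum_Cons[OF w1 R_def]
  have R2: "R = ordinal_sum ((X2, b2) # w2)" using eq R_def by simp
  note f2 = ordinal_sum_Cons[OF w2 R2]
  note c1 = cot_basis_Cons[OF w1] and c2 = cot_basis_Cons[OF w2]
  have ind: "ord_indecomposable X1 (rel_decode b1)" using indec_labelsD(3)[OF c1(4)] .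
  define C where "C = X2"
  define D where "D = X1 - X2"
  have "C \<union> D = X1" unfolding C_def D_def using sub by blast
  moreover have "C \<inter> D = {}" unfolding C_def D_def by blast
  moreover have "C \<noteq> {}" unfolding C_def using c2(3) .
  moreover have "D \<noteq> {}" unfolding D_def using sub ne by blast
  moreover have "C \<times> D \<subseteq> rel_decode b1"
  proof
    fix p assume p: "p \<in> C \<times> D"
    have "D \<subseteq> A - X2" unfolding D_def using c1(2) by blast
    then have "p \<in> R" using p f2(3) unfolding C_def by blast
    moreover have "p \<in> X1 \<times> X1" using p sub unfolding C_def D_def by blast
    ultimately show "p \<in> rel_decode b1" using f1(1) unfolding restr_def by blast
  qed
  moreover have "rel_decode b1 \<inter> (D \<times> C) = {}"
  proof (rule ccontr)
    assume "rel_decode b1 \<inter> (D \<times> C) \<noteq> {}"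
    then obtain p q where pq: "(p, q) \<in> rel_decode b1" "p \<in> D" "q \<in> C" by blast
    have "(p, q) \<in> R" using pq(1) f1(1) unfolding restr_def by blast
    moreover have "p \<in> A - X2" using pq(2) c1(2) unfolding D_def by blast
    ultimately have "q \<in> A - X2" using f2(4) by blast
    then show False using pq(3) unfolding C_def by blast
  qed
  ultimately show False using ind unfolding ord_indecomposable_def by blast
qed

lemma ordinal_sum_first_blocks_nested:
  assumes w1: "(X1, b1) # w1 \<in> cot_basis indec_labels A" and w2: "(X2, b2) # w2 \<in> cot_basis indec_labels A"
    and eq: "ordinal_sum ((X1, b1) # w1) = ordinal_sum ((X2, b2) # w2)"
  shows "X1 \<subseteq> X2 \<or> X2 \<subseteq> X1"
proof (rule ccontr)
  assume "\<not> (X1 \<subseteq> X2 \<or> X2 \<subseteq> X1)"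
  then obtain x y where xy: "x \<in> X1" "x \<notin> X2" "y \<in> X2" "y \<notin> X1" by blast
  define R where "R = ordinal_sum ((X1, b1) # w1)"
  have R2: "R = ordinal_sum ((X2, b2) # w2)" using eq R_def by simp
  note f1 = ordinal_sum_Cons[OF w1 R_def] and f2 = ordinal_sum_Cons[OF w2 R2]
  have "x \<in> A" "y \<in> A" using cot_basis_Cons(2)[OF w1] cot_basis_Cons(2)[OF w2] xy by blast+
  then have "(y, x) \<in> R" "y \<in> A - X1" using f2(3) xy by blast+
  then have "x \<in> A - X1" using f1(4) by blast
  then show False using xy by blast
qed

lemma ordinal_sum_inj:
  "w1 \<in> cot_basis indec_labels A \<Longrightarrow> w2 \<in> cot_basis indec_labels A \<Longrightarrow> ordinal_sum w1 = ordinal_sum w2 \<Longrightarrow> w1 = w2"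
proof (induction w1 arbitrary: A w2)
  case Nil
  then have "A = {}" unfolding cot_basis_def set_composition_iff by auto
  then show ?case using Nil cot_basis_empty by auto
next
  case (Cons p1 w1)
  obtain X1 b1 where p1: "p1 = (X1, b1)" by (cases p1)
  have A: "A \<noteq> {}" using cot_basis_Cons(2,3)[OF Cons.prems(1)[unfolded p1]] by blast
  obtain p2 w2' where w2: "w2 = p2 # w2'"
    using Cons.prems(2) A by (cases w2) (auto simp: cot_basis_def set_composition_iff)
  obtain X2 b2 where p2: "p2 = (X2, b2)" by (cases p2)
  have h1: "(X1, b1) # w1 \<in> cot_basis indec_labels A" using Cons.prems(1) p1 by simp
  have h2: "(X2, b2) # w2' \<in> cot_basis indec_labels A" using Cons.prems(2) w2 p2 by simp
  have eq: "ordinal_sum ((X1, b1) # w1) = ordinal_sum ((X2, b2) # w2')" using Cons.prems(3) p1 p2 w2 by simp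
  have X: "X1 = X2"
    using ordinal_sum_first_blocks_nested[OF h1 h2 eq] ordinal_sum_first_block[OF h1 h2 eq]
      ordinal_sum_first_block[OF h2 h1 eq[symmetric]] by blast
  define R where "R = ordinal_sum ((X1, b1) # w1)"
  have R2: "R = ordinal_sum ((X1, b2) # w2')" using eq R_def X by simp
  have h2': "(X1, b2) # w2' \<in> cot_basis indec_labels A" using h2 X by simp
  note f1 = ordinal_sum_Cons[OF h1 R_def] and f2 = ordinal_sum_Cons[OF h2' R2]
  have "rel_decode b1 = rel_decode b2" using f1(1) f2(1) by simp
  then have b: "b1 = b2"
    using indec_labelsD(4)[OF cot_basis_Cons(4)[OF h1]] indec_labelsD(4)[OF cot_basis_Cons(4)[OF h2']] by metis
  have "ordinal_sum w1 = ordinal_sum w2'" using f1(2) f2(2) by simp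
  then have "w1 = w2'" using Cons.IH[OF cot_basis_Cons(1)[OF h1] cot_basis_Cons(1)[OF h2']] by blast
  then show ?case using p1 p2 w2 X b by simp
qed

lemma card_cot_basis_le:
  assumes "finite A"
  shows "card (cot_basis indec_labels A) \<le> card (top_basis A)"
proof -
  have "inj_on ordinal_sum (cot_basis indec_labels A)" using ordinal_sum_inj by (meson inj_onI)
  moreover have "ordinal_sum ` cot_basis indec_labels A \<subseteq> top_basis A" using ordinal_sum_top_basis by blast
  ultimately show ?thesis using card_inj_on_le finite_top_basis[OF assms] by blast
qed

lemma lincomb_top_to_cot_append:
  fixes x :: "nat rel \<Rightarrow> 'k::comm_ring_1"
  assumes CB: "C \<inter> B = {}" and x: "finsupp_on (top_basis (C \<union> B)) x"
    and u: "u \<in> cot_basis indec_labels C" and v: "v \<in> cot_basis indec_labels B"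
  shows "lincomb x (top_to_cot (C \<union> B)) (u @ v) =
    (\<Sum>U\<in>(\<lambda>R. restr R C) ` supp x. \<Sum>V\<in>(\<lambda>R. restr R B) ` supp x.
      coprod_coeff x C B U V * (top_to_cot C U u * top_to_cot B V v))"
proof -
  have "lincomb x (top_to_cot (C \<union> B)) (u @ v) = (\<Sum>R\<in>supp x. if upclosed R B
      then x R * (top_to_cot C (restr R C) u * top_to_cot B (restr R B) v) else 0)"
    unfolding lincomb_def
  proof (rule sum.cong[OF refl])
    fix R assume "R \<in> supp x"
    then have "R \<in> top_basis (C \<union> B)" using x unfolding finsupp_on_def by blast
    from top_to_cot_append[where 'k = 'k, OF CB this u v]
    show "x R * top_to_cot (C \<union> B) R (u @ v) = (if upclosed R B
        then x R * (top_to_cot C (restr R C) u * top_to_cot B (restr R B) v) else 0)"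
      by simp
  qed
  also have "\<dots> = (\<Sum>U\<in>(\<lambda>R. restr R C) ` supp x. \<Sum>V\<in>(\<lambda>R. restr R B) ` supp x.
      coprod_coeff x C B U V * (top_to_cot C U u * top_to_cot B V v))"
    using x unfolding finsupp_on_def by (intro sum_coprod_coeff) blast
  finally show ?thesis .
qed

lemma top_to_cot_kernel_primitive:
  fixes x :: "nat rel \<Rightarrow> 'k::comm_ring_1"
  assumes IH: "\<And>A' (x' :: nat rel \<Rightarrow> 'k). A' \<subset> A \<Longrightarrow> finsupp_on (top_basis A') x' \<Longrightarrow>
      lincomb x' (top_to_cot A') = (\<lambda>_. 0) \<Longrightarrow> x' = (\<lambda>_. 0)"
    and x: "finsupp_on (top_basis A) x" and ker: "lincomb x (top_to_cot A) = (\<lambda>_. 0)"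
  shows "primitive A x"
  unfolding primitive_def
proof (intro allI impI)
  fix B U V assume B: "B \<subseteq> A" "B \<noteq> {}" "B \<noteq> A"
  define C where "C = A - B"
  have CB: "C \<inter> B = {}" "C \<union> B = A" "C \<subset> A" "B \<subset> A" using B unfolding C_def by auto
  define UU where "UU = (\<lambda>R. restr R C) ` supp x"
  define VV where "VV = (\<lambda>R. restr R B) ` supp x"
  have zero: "(\<Sum>U\<in>UU. \<Sum>V\<in>VV. coprod_coeff x C B U V * (top_to_cot C U u * top_to_cot B V v)) = (0 :: 'k)"
    for u v
  proof (cases "u \<in> cot_basis indec_labels C \<and> v \<in> cot_basis indec_labels B")
    case True
    then show ?thesis
      using lincomb_top_to_cot_append[OF CB(1) _ conjunct1[OF True] conjunct2[OF True], of x] x ker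
      unfolding CB(2) UU_def VV_def by simp
  next
    case False
    then have "top_to_cot C U u * top_to_cot B V v = (0 :: 'k)" for U V
      unfolding top_to_cot_def by auto
    then show ?thesis by simp
  qed
  have UV: "finite UU" "UU \<subseteq> top_basis C" "finite VV" "VV \<subseteq> top_basis B"
    using x top_basis_restr CB unfolding UU_def VV_def finsupp_on_def by auto
  show "coprod_coeff x (A - B) B U V = 0"
  proof (cases "U \<in> UU \<and> V \<in> VV")
    case True
    show ?thesis unfolding C_def[symmetric]
      using lincomb_tensor_injective[where F = "top_to_cot C" and G = "top_to_cot B",
          OF IH[OF CB(3)] IH[OF CB(4)] UV zero] True by blast
  next
    case False
    then have empty: "{R\<in>supp x. upclosed R B \<and> restr R C = U \<and> restr R B = V} = {}"
      unfolding UU_def VV_def by blast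
    show ?thesis unfolding coprod_coeff_def C_def[symmetric] empty by simp
  qed
qed

lemma top_to_cot_single:
  assumes "finite A" "T \<in> top_basis A" "ord_indecomposable A T" "R \<in> top_basis A"
  shows "(top_to_cot A R [(A, rel_encode T)] :: 'k::comm_ring_1) = prim_coeff A R T"
proof -
  have "A \<noteq> {}" using assms(3) unfolding ord_indecomposable_def by blast
  moreover have T: "rel_encode T \<in> indec_labels A" using indec_labelsI[OF assms(1-3)] .
  ultimately have "[(A, rel_encode T)] \<in> cot_basis indec_labels A"
    using assms(1) unfolding cot_basis_def set_composition_iff by auto
  moreover have "rel_decode (rel_encode T) = T"
    using rel_decode_encode finite_top_basis_rel[OF assms(1,2)] by blast
  ultimately show ?thesis
    unfolding top_to_cot_def indec_coeff_def using T restr_absorb[OF top_basis_subset[OF assms(4)]] by simp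
qed

lemma primitive_kernel_indecomposable:
  fixes x :: "nat rel \<Rightarrow> 'k::{idom, ring_char_0}"
  assumes fin: "finite A" and x: "finsupp_on (top_basis A) x" and prim: "primitive A x"
    and ker: "lincomb x (top_to_cot A) = (\<lambda>_. 0)"
    and T: "T \<in> top_basis A" "ord_indecomposable A T"
  shows "x T = 0"
proof -
  have fs: "finite (supp x)" and sx: "supp x \<subseteq> top_basis A" using x unfolding finsupp_on_def by auto
  have "0 = (\<Sum>R\<in>supp x. x R * top_to_cot A R [(A, rel_encode T)])"
    using fun_cong[OF ker, of "[(A, rel_encode T)]"] unfolding lincomb_def by simp
  also have "\<dots> = (\<Sum>R\<in>supp x. x R * prim_coeff A R T)"
    using top_to_cot_single[OF fin T] sx by (intro sum.cong refl) auto
  also have "\<dots> = (\<Sum>a\<in>A. \<Sum>R\<in>supp x. x R * prim_proj a A R T)"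
    unfolding prim_coeff_def by (simp add: sum_distrib_left sum.swap[of _ "supp x"])
  also have "\<dots> = of_nat (card A) * x T"
    using prim_proj_primitive[OF fin fs prim] by simp
  finally have "of_nat (card A) * x T = 0" ..
  moreover have "A \<noteq> {}" using T(2) unfolding ord_indecomposable_def by blast
  ultimately show ?thesis using fin by simp
qed

lemma upclosed_subset_ordinal_sum:
  "R \<subseteq> (C \<union> B) \<times> (C \<union> B) \<Longrightarrow> upclosed R B \<Longrightarrow> R \<subseteq> restr R C \<union> C \<times> B \<union> restr R B"
  unfolding upclosed_def restr_def by blast

lemma primitive_eq_zero:
  fixes x :: "nat rel \<Rightarrow> 'k::comm_ring_1"
  assumes fin: "finite A" and x: "finsupp_on (top_basis A) x" and prim: "primitive A x"
    and indec: "\<And>T. T \<in> top_basis A \<Longrightarrow> ord_indecomposable A T \<Longrightarrow> x T = 0" and A: "A \<noteq> {}"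
  shows "x = (\<lambda>_. 0)"
proof (rule ccontr)
  assume "x \<noteq> (\<lambda>_. 0)"
  then have "supp x \<noteq> {}" unfolding supp_def by auto
  then obtain R0 where R0: "R0 \<in> supp x" and min: "\<And>R. R \<in> supp x \<Longrightarrow> card R0 \<le> card R"
    using ex_has_least_nat[of "\<lambda>R. R \<in> supp x" _ card] by blast
  have R0A: "R0 \<in> top_basis A" using R0 x unfolding finsupp_on_def by blast
  then have "\<not> ord_indecomposable A R0" using R0 indec unfolding supp_def by blast
  then obtain C B where CB: "C \<union> B = A" "C \<inter> B = {}" "C \<noteq> {}" "B \<noteq> {}"
    and split: "C \<times> B \<subseteq> R0" "R0 \<inter> (B \<times> C) = {}"
    using A unfolding ord_indecomposable_def by blast
  have sub0: "R0 \<subseteq> A \<times> A" using R0A by (rule top_basis_subset)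
  have "{R\<in>supp x. upclosed R B \<and> restr R C = restr R0 C \<and> restr R B = restr R0 B} = {R0}"
  proof (intro equalityI subsetI)
    fix R assume "R \<in> {R\<in>supp x. upclosed R B \<and> restr R C = restr R0 C \<and> restr R B = restr R0 B}"
    then have R: "R \<in> supp x" "upclosed R B" "restr R C = restr R0 C" "restr R B = restr R0 B" by auto
    have "R \<subseteq> (C \<union> B) \<times> (C \<union> B)" using R(1) x CB(1) top_basis_subset unfolding finsupp_on_def by blast
    then have "R \<subseteq> R0" using upclosed_subset_ordinal_sum[OF _ R(2)] R(3,4) split(1) unfolding restr_def by blast
    moreover have "finite R0" using finite_top_basis_rel[OF fin R0A] .
    ultimately show "R \<in> {R0}" using min[OF R(1)] by (simp add: card_seteq)
  next
    fix R assume "R \<in> {R0}"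
    moreover have "upclosed R0 B" using split(2) sub0 CB(1) unfolding upclosed_def by blast
    ultimately show "R \<in> {R\<in>supp x. upclosed R B \<and> restr R C = restr R0 C \<and> restr R B = restr R0 B}"
      using R0 by simp
  qed
  then have "coprod_coeff x C B (restr R0 C) (restr R0 B) = x R0" unfolding coprod_coeff_def by simp
  moreover have "B \<subseteq> A" "B \<noteq> A" "A - B = C" using CB by blast+
  then have "coprod_coeff x C B (restr R0 C) (restr R0 B) = 0"
    using prim CB(4) unfolding primitive_def by metis
  ultimately show False using R0 unfolding supp_def by simp
qed

lemma top_to_cot_injective:
  fixes x :: "nat rel \<Rightarrow> 'k::{idom, ring_char_0}"
  shows "finite A \<Longrightarrow> finsupp_on (top_basis A) x \<Longrightarrow> lincomb x (top_to_cot A) = (\<lambda>_. 0) \<Longrightarrow> x = (\<lambda>_. 0)"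
proof (induction "card A" arbitrary: A x rule: less_induct)
  case less
  show ?case
  proof (cases "A = {}")
    case True
    then have "supp x \<subseteq> {{}}" using less.prems(2) top_basis_empty unfolding finsupp_on_def by simp
    moreover have "lincomb x (top_to_cot A) [] = x {}"
      using lincomb_eq_sum[of "{{}}" x "top_to_cot A" "[]"] calculation True top_to_cot_empty[where 'k = 'k]
      by (simp add: delta_vec_def)
    ultimately show ?thesis using less.prems(3) unfolding supp_def by auto
  next
    case False
    have "primitive A x"
    proof (rule top_to_cot_kernel_primitive[OF _ less.prems(2,3)])
      fix A' and x' :: "nat rel \<Rightarrow> 'k"
      assume "A' \<subset> A" "finsupp_on (top_basis A') x'" "lincomb x' (top_to_cot A') = (\<lambda>_. 0)"
      then show "x' = (\<lambda>_. 0)"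
        using less.hyps psubset_card_mono[OF less.prems(1)] finite_subset[OF psubset_imp_subset less.prems(1)]
        by blast
    qed
    then show ?thesis
      using primitive_eq_zero primitive_kernel_indecomposable less.prems False by blast
  qed
qed

lemma top_to_cot_bij:
  assumes "finite A"
  shows "bij_betw (\<lambda>x. lincomb x (top_to_cot A :: nat rel \<Rightarrow> word \<Rightarrow> 'k::field_char_0))
    {x. finsupp_on (top_basis A) x} {y. finsupp_on (cot_basis indec_labels A) y}"
  by (rule lincomb_bij_betw[OF finite_top_basis[OF assms] finite_cot_basis_indec[OF assms]
      card_cot_basis_le[OF assms] supp_top_to_cot top_to_cot_injective[OF assms]])

theorem theorem42:
  shows "\<exists>(QB :: nat set \<Rightarrow> nat set) (Qact :: (nat \<Rightarrow> nat) \<Rightarrow> nat set \<Rightarrow> nat \<Rightarrow> nat \<Rightarrow> 'k::field_char_0)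
            (\<phi> :: nat set \<Rightarrow> nat rel \<Rightarrow> word \<Rightarrow> 'k).
           QB {} = {} \<and> species QB Qact \<and> top_cot_iso QB Qact \<phi>"
proof (intro exI conjI)
  show "indec_labels {} = {}" by (rule indec_labels_empty)
  show "species indec_labels (indec_act :: _ \<Rightarrow> _ \<Rightarrow> _ \<Rightarrow> _ \<Rightarrow> 'k)" by (rule species_indec_act)
  show "top_cot_iso indec_labels (indec_act :: _ \<Rightarrow> _ \<Rightarrow> _ \<Rightarrow> _ \<Rightarrow> 'k) top_to_cot"
    unfolding top_cot_iso_def
    by (intro conjI allI impI ballI; (elim conjE)?)
      (simp_all add: finsupp_top_to_cot top_to_cot_bij top_to_cot_top_act top_to_cot_empty
        top_to_cot_disjoint_union top_to_cot_append)
qed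

end
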